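(* Let $\mathbf W$ be a general channel with finite input alphabet $\mathcal X$ and arbitrary output alphabet $\mathcal Y$, let $\mathbf c$ be a general cost function and $\Gamma\in\mathbb R$, and suppose $\mathbf W$ satisfies the strong converse property with input cost constraint $\Gamma$. Then for all $\mu\ge0,\lambda\ge0$ with $\mu+\lambda<1$, $D(\mu,\lambda,\Gamma|\mathbf W)=C_s(\Gamma|\mathbf W)$.
   Context: A general channel $\mathbf W=\{W^n\}$ with input alphabet $\mathcal X$ and output alphabet $\mathcal Y$ is a sequence of transition probabilities $W^n(\cdot|\mathbf x)$ on $\mathcal Y^n$, $\mathbf x\in\mathcal X^n$. A general cost function is a sequence of functions $c_n:\mathcal X^n\to\mathbb R$; $\mathcal X^n(\Gamma)=\{\mathbf x:\frac1n c_n(\mathbf x)\le\Gamma\}$. $QW^n(B)=\sum_{\mathbf x}Q(\mathbf x)W^n(B|\mathbf x)$. Transmission codes: an $(n,M_n,\varepsilon_n,\Gamma)$ code is an encoder $\varphi_n:\{1,\dots,M_n\}\to\mathcal X^n$ with $\frac1nc_n(\varphi_n(i))\le\Gamma$ for all $i$, and a decoder $\psi_n:\mathcal Y^n\to\{1,\dots,M_n\}$, with $\varepsilon_n=\frac1{M_n}\sum_iW^n(\mathcal D_i^c|\varphi_n(i))$, $\mathcal D_i=\psi_n^{-1}(i)$. $C_s(\Gamma|\mathbf W)$ is the supremum of $R$ such that such codes exist with $\varepsilon_n\to0$ and $\liminf\frac1n\log M_n\ge R$. The strong converse property with input cost constraint $\Gamma$: every sequence of such codes with $\liminf\frac1n\log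 M_n>C_s(\Gamma|\mathbf W)$ has $\varepsilon_n\to1$. Identification codes: an $(n,N_n,\mu_n,\lambda_n,\Gamma)$ code consists of distributions $Q_1,\dots,Q_{N_n}$ on $\mathcal X^n$ with $Q_i(\mathcal X^n(\Gamma))=1$ and (not necessarily disjoint) sets $\mathcal D_1,\dots,\mathcal D_{N_n}\subset\mathcal Y^n$, with $\mu_n=\max_iQ_iW^n(\mathcal D_i^c)$, $\lambda_n=\max_{i\ne j}Q_jW^n(\mathcal D_i)$. $R$ is $(\mu,\lambda,\Gamma)$-achievable if such codes exist with $\limsup\mu_n\le\mu$, $\limsup\lambda_n\le\lambda$, $\liminf\frac1n\log\log N_n\ge R$; $D(\mu,\lambda,\Gamma|\mathbf W)$ is the supremum of such $R$. *)

theory Defs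
  imports "HOL-Probability.Probability"
begin

text \<open>The output space Y^n is an arbitrary measurable space Y n (outputs of type 'b).
  W n x is the transition probability W^n(.|x) on Y n.\<close>

definition general_channel :: "(nat \<Rightarrow> 'a list \<Rightarrow> 'b measure) \<Rightarrow> (nat \<Rightarrow> 'b measure) \<Rightarrow> bool" where
  "general_channel W Y \<longleftrightarrow>
     (\<forall>n x. length x = n \<longrightarrow> prob_space (W n x) \<and> sets (W n x) = sets (Y n))"

definition cost_set :: "(nat \<Rightarrow> 'a list \<Rightarrow> real) \<Rightarrow> real \<Rightarrow> nat \<Rightarrow> 'a list set" where
  "cost_set c \<Gamma> n = {x. length x = n \<and> c n x / real n \<le> \<Gamma>}"

definition outprob :: "(nat \<Rightarrow> 'a list \<Rightarrow> 'b measure) \<Rightarrow> nat \<Rightarrow> 'a list pmf \<Rightarrow> 'b set \<Rightarrow> real" where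
  "outprob W n Q B = measure_pmf.expectation Q (\<lambda>x. measure (W n x) B)"

definition tcode ::
  "(nat \<Rightarrow> 'a list \<Rightarrow> 'b measure) \<Rightarrow> (nat \<Rightarrow> 'b measure) \<Rightarrow> (nat \<Rightarrow> 'a list \<Rightarrow> real) \<Rightarrow> real
   \<Rightarrow> nat \<Rightarrow> nat \<Rightarrow> (nat \<Rightarrow> 'a list) \<Rightarrow> ('b \<Rightarrow> nat) \<Rightarrow> real \<Rightarrow> bool" where
  "tcode W Y c \<Gamma> n M \<phi> \<psi> \<epsilon> \<longleftrightarrow>
     M \<ge> 1 \<and> (\<forall>i\<in>{1..M}. \<phi> i \<in> cost_set c \<Gamma> n) \<and>
     \<psi> \<in> measurable (Y n) (count_space {1..M}) \<and>
     \<epsilon> = (\<Sum>i=1..M. measure (W n (\<phi> i)) (space (Y n) - \<psi> -` {i})) / real M"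

definition tc_achievable ::
  "(nat \<Rightarrow> 'a list \<Rightarrow> 'b measure) \<Rightarrow> (nat \<Rightarrow> 'b measure) \<Rightarrow> (nat \<Rightarrow> 'a list \<Rightarrow> real) \<Rightarrow> real \<Rightarrow> real \<Rightarrow> bool" where
  "tc_achievable W Y c \<Gamma> R \<longleftrightarrow>
     (\<exists>M \<phi> \<psi> \<epsilon>. (\<forall>n\<ge>1. tcode W Y c \<Gamma> n (M n) (\<phi> n) (\<psi> n) (\<epsilon> n)) \<and>
        \<epsilon> \<longlonglongrightarrow> 0 \<and>
        Liminf sequentially (\<lambda>n. ereal (ln (real (M n)) / real n)) \<ge> ereal R)"

text \<open>C_s(Gamma|W), as an extended real (Sup of the empty set is -infinity).\<close>
definition Cs ::
  "(nat \<Rightarrow> 'a list \<Rightarrow> 'b measure) \<Rightarrow> (nat \<Rightarrow> 'b measure) \<Rightarrow> (nat \<Rightarrow> 'a list \<Rightarrow> real) \<Rightarrow> real \<Rightarrow> ereal" where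
  "Cs W Y c \<Gamma> = Sup {ereal R | R. tc_achievable W Y c \<Gamma> R}"

definition strong_converse ::
  "(nat \<Rightarrow> 'a list \<Rightarrow> 'b measure) \<Rightarrow> (nat \<Rightarrow> 'b measure) \<Rightarrow> (nat \<Rightarrow> 'a list \<Rightarrow> real) \<Rightarrow> real \<Rightarrow> bool" where
  "strong_converse W Y c \<Gamma> \<longleftrightarrow>
     (\<forall>M \<phi> \<psi> \<epsilon>. (\<forall>n\<ge>1. tcode W Y c \<Gamma> n (M n) (\<phi> n) (\<psi> n) (\<epsilon> n)) \<and>
        Liminf sequentially (\<lambda>n. ereal (ln (real (M n)) / real n)) > Cs W Y c \<Gamma>
        \<longrightarrow> \<epsilon> \<longlonglongrightarrow> 1)"

definition idcode ::
  "(nat \<Rightarrow> 'a list \<Rightarrow> 'b measure) \<Rightarrow> (nat \<Rightarrow> 'b measure) \<Rightarrow> (nat \<Rightarrow> 'a list \<Rightarrow> real) \<Rightarrow> real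
   \<Rightarrow> nat \<Rightarrow> nat \<Rightarrow> (nat \<Rightarrow> 'a list pmf) \<Rightarrow> (nat \<Rightarrow> 'b set) \<Rightarrow> ereal \<Rightarrow> ereal \<Rightarrow> bool" where
  "idcode W Y c \<Gamma> n N Q D mu lam \<longleftrightarrow>
     N \<ge> 1 \<and> (\<forall>i\<in>{1..N}. set_pmf (Q i) \<subseteq> cost_set c \<Gamma> n \<and> D i \<in> sets (Y n)) \<and>
     mu = (SUP i\<in>{1..N}. ereal (outprob W n (Q i) (space (Y n) - D i))) \<and>
     lam = (SUP ij\<in>{(i,j). i\<in>{1..N} \<and> j\<in>{1..N} \<and> i \<noteq> j}.
              ereal (outprob W n (Q (snd ij)) (D (fst ij))))"

definition id_achievable ::
  "(nat \<Rightarrow> 'a list \<Rightarrow> 'b measure) \<Rightarrow> (nat \<Rightarrow> 'b measure) \<Rightarrow> (nat \<Rightarrow> 'a list \<Rightarrow> real) \<Rightarrow> real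
   \<Rightarrow> real \<Rightarrow> real \<Rightarrow> real \<Rightarrow> bool" where
  "id_achievable W Y c \<Gamma> mu lam R \<longleftrightarrow>
     (\<exists>N Q D mus lams. (\<forall>n\<ge>1. idcode W Y c \<Gamma> n (N n) (Q n) (D n) (mus n) (lams n)) \<and>
        limsup mus \<le> ereal mu \<and> limsup lams \<le> ereal lam \<and>
        Liminf sequentially (\<lambda>n. ereal (ln (ln (real (N n))) / real n)) \<ge> ereal R)"

definition IDcap ::
  "(nat \<Rightarrow> 'a list \<Rightarrow> 'b measure) \<Rightarrow> (nat \<Rightarrow> 'b measure) \<Rightarrow> (nat \<Rightarrow> 'a list \<Rightarrow> real) \<Rightarrow> real
   \<Rightarrow> real \<Rightarrow> real \<Rightarrow> ereal" where
  "IDcap W Y c \<Gamma> mu lam = Sup {ereal R | R. id_achievable W Y c \<Gamma> mu lam R}"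

end

theory Submission
  imports Defs "HOL-Real_Asymp.Real_Asymp"
begin

text \<open>Achievability: a transmission code of rate \<open>R\<close> is turned into an identification code
  with doubly exponentially many messages.  Messages are words of length \<open>K \<approx> e^(n R) / n\<close>
  over an alphabet of size \<open>q \<approx> n\<close> with small pairwise agreement (Gilbert--Varshamov); a
  message sends the codeword of a uniformly random position together with its letter there.

  Converse: the decoding sets of an identification code cut the output space into finitely
  many atoms.  If, for some message, the likelihood ratio of the atom exceeds \<open>e^(n (C + \<delta>))\<close>
  with non-negligible probability, Feinstein's random coding gives transmission codes of rate
  \<open>C + \<delta>/2\<close> whose error stays below one, which the strong converse forbids.  Otherwise soft
  covering approximates the output distribution of every message by the empirical output
  distribution of \<open>e^(n (C + 2\<delta>))\<close> codewords; distinct messages need distinct codebooks,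
  hence \<open>ln ln N \<le> n (C + 3\<delta>)\<close>.\<close>

section \<open>Random codebooks\<close>

lemma finite_set_Pi_pmf:
  assumes "finite A" "\<And>x. x \<in> A \<Longrightarrow> finite (set_pmf (p x))"
  shows "finite (set_pmf (Pi_pmf A d p))"
  using assms by (auto simp: set_Pi_pmf intro!: finite_PiE_dflt)

lemma set_Pi_pmf_component:
  assumes "finite A" "c \<in> set_pmf (Pi_pmf A d (\<lambda>_. P))" "m \<in> A"
  shows "c m \<in> set_pmf P"
  using assms set_Pi_pmf[of A d "\<lambda>_. P"] by (auto simp: PiE_dflt_def)

lemma exists_in_set_pmf_le_expectation:
  fixes F :: "'a \<Rightarrow> real"
  assumes "finite (set_pmf M)"
  shows "\<exists>c\<in>set_pmf M. F c \<le> measure_pmf.expectation M F"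
proof (rule ccontr)
  assume "\<not> ?thesis"
  hence lt: "\<And>c. c \<in> set_pmf M \<Longrightarrow> measure_pmf.expectation M F < F c" by auto
  have "measure_pmf.expectation M F = (\<Sum>a\<in>set_pmf M. F a * pmf M a)"
    using assms by (intro integral_measure_pmf_real) auto
  also have "\<dots> > (\<Sum>a\<in>set_pmf M. measure_pmf.expectation M F * pmf M a)"
  proof (rule sum_strict_mono_ex1)
    show "finite (set_pmf M)" by fact
    show "\<forall>x\<in>set_pmf M. measure_pmf.expectation M F * pmf M x \<le> F x * pmf M x"
      using lt by (meson less_imp_le mult_right_mono pmf_nonneg)
    obtain a where a: "a \<in> set_pmf M" using set_pmf_not_empty[of M] by blast
    show "\<exists>a\<in>set_pmf M. measure_pmf.expectation M F * pmf M a < F a * pmf M a"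
      using a lt[OF a] pmf_positive[OF a] by (intro bexI[of _ a]) (simp add: mult_strict_right_mono)
  qed
  also have "(\<Sum>a\<in>set_pmf M. measure_pmf.expectation M F * pmf M a) = measure_pmf.expectation M F"
    using assms by (simp add: sum_distrib_left[symmetric] sum_pmf_eq_1)
  finally show False by simp
qed

lemma expectation_cong_set_pmf:
  fixes f g :: "'x \<Rightarrow> real"
  assumes "\<And>x. x \<in> set_pmf P \<Longrightarrow> f x = g x"
  shows "measure_pmf.expectation P f = measure_pmf.expectation P g"
  using assms by (intro integral_cong_AE) (auto simp: AE_measure_pmf_iff)

lemma map_Pi_pmf_two_components:
  assumes "finite A" "m \<in> A" "k \<in> A" "m \<noteq> k"
  shows "map_pmf (\<lambda>c. (c m, c k)) (Pi_pmf A d p) = pair_pmf (p m) (p k)"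
proof -
  define A' where "A' = A - {m}"
  have A: "A = insert m A'" "m \<notin> A'" "finite A'" "k \<in> A'"
    using assms by (auto simp: A'_def)
  have "map_pmf (\<lambda>c. (c m, c k)) (Pi_pmf A d p) =
        map_pmf (\<lambda>c. (c m, c k)) (map_pmf (\<lambda>(y,f). f(m:=y)) (pair_pmf (p m) (Pi_pmf A' d p)))"
    using A by (simp add: Pi_pmf_insert)
  also have "\<dots> = map_pmf (\<lambda>(a, b). (id a, (\<lambda>f. f k) b)) (pair_pmf (p m) (Pi_pmf A' d p))"
    unfolding pmf.map_comp using assms by (intro pmf.map_cong) (auto simp: o_def)
  also have "\<dots> = pair_pmf (p m) (p k)"
    unfolding map_pair using A by (simp add: Pi_pmf_component)
  finally show ?thesis .
qed

lemma expectation_Pi_pmf_component: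
  fixes f :: "'b \<Rightarrow> real"
  assumes "finite A" "m \<in> A"
  shows "measure_pmf.expectation (Pi_pmf A d p) (\<lambda>c. f (c m)) = measure_pmf.expectation (p m) f"
proof -
  have "measure_pmf.expectation (Pi_pmf A d p) (\<lambda>c. f (c m)) =
        measure_pmf.expectation (map_pmf (\<lambda>c. c m) (Pi_pmf A d p)) f" by simp
  also have "\<dots> = measure_pmf.expectation (p m) f" using assms by (simp add: Pi_pmf_component)
  finally show ?thesis .
qed

lemma expectation_pair_pmf_mult:
  fixes f g :: "'b \<Rightarrow> real"
  assumes "finite (set_pmf P)" "finite (set_pmf Q)"
  shows "measure_pmf.expectation (pair_pmf P Q) (\<lambda>z. f (fst z) * g (snd z)) =
         measure_pmf.expectation P f * measure_pmf.expectation Q g"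
proof -
  have "measure_pmf.expectation (pair_pmf P Q) (\<lambda>z. f (fst z) * g (snd z)) =
     (\<Sum>z\<in>set_pmf P \<times> set_pmf Q. (f (fst z) * pmf P (fst z)) * (g (snd z) * pmf Q (snd z)))"
    using assms by (subst integral_measure_pmf_real[where A="set_pmf P \<times> set_pmf Q"])
      (auto simp: pmf_pair intro!: sum.cong)
  also have "\<dots> = (\<Sum>a\<in>set_pmf P. \<Sum>b\<in>set_pmf Q. (f a * pmf P a) * (g b * pmf Q b))"
    by (simp add: sum.cartesian_product case_prod_unfold)
  also have "\<dots> = (\<Sum>a\<in>set_pmf P. f a * pmf P a) * (\<Sum>b\<in>set_pmf Q. g b * pmf Q b)"
    by (simp add: sum_product)
  also have "\<dots> = measure_pmf.expectation P f * measure_pmf.expectation Q g"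
    using assms by (simp add: integral_measure_pmf_real)
  finally show ?thesis .
qed

lemma expectation_Pi_pmf_two_components_mult:
  fixes f g :: "'b \<Rightarrow> real"
  assumes "finite A" "m \<in> A" "k \<in> A" "m \<noteq> k" "finite (set_pmf (p m))" "finite (set_pmf (p k))"
  shows "measure_pmf.expectation (Pi_pmf A d p) (\<lambda>c. f (c m) * g (c k)) =
         measure_pmf.expectation (p m) f * measure_pmf.expectation (p k) g"
proof -
  have "measure_pmf.expectation (Pi_pmf A d p) (\<lambda>c. f (c m) * g (c k)) =
        measure_pmf.expectation (map_pmf (\<lambda>c. (c m, c k)) (Pi_pmf A d p)) (\<lambda>z. f (fst z) * g (snd z))"
    by simp
  also have "\<dots> = measure_pmf.expectation (p m) f * measure_pmf.expectation (p k) g"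
    using assms by (simp add: map_Pi_pmf_two_components expectation_pair_pmf_mult)
  finally show ?thesis .
qed

lemma expectation_abs_le_sqrt_second_moment:
  fixes Z :: "'a \<Rightarrow> real"
  assumes "finite (set_pmf M)"
  shows "measure_pmf.expectation M (\<lambda>x. \<bar>Z x\<bar>) \<le> sqrt (measure_pmf.expectation M (\<lambda>x. (Z x)^2))"
proof -
  have "0 \<le> measure_pmf.variance M (\<lambda>x. \<bar>Z x\<bar>)" by (rule measure_pmf.variance_positive)
  also have "\<dots> = measure_pmf.expectation M (\<lambda>x. (Z x)^2) - (measure_pmf.expectation M (\<lambda>x. \<bar>Z x\<bar>))^2"
    using assms by (subst measure_pmf.variance_eq) (auto intro: integrable_measure_pmf_finite)
  finally show ?thesis by (intro real_le_rsqrt) simp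
qed

lemma second_moment_sum_Pi_pmf:
  fixes U :: "'x \<Rightarrow> real"
  assumes fin: "finite (set_pmf P)" and mean0: "measure_pmf.expectation P U = 0"
  shows "measure_pmf.expectation (Pi_pmf {..<M} d (\<lambda>_. P)) (\<lambda>c. (\<Sum>m<M. U (c m))^2)
       = real M * measure_pmf.expectation P (\<lambda>x. (U x)^2)"
proof -
  let ?Pi = "Pi_pmf {..<M} d (\<lambda>_. P)"
  have int: "integrable (measure_pmf ?Pi) f" for f :: "_ \<Rightarrow> real"
    using fin by (intro integrable_measure_pmf_finite finite_set_Pi_pmf) auto
  have cross: "measure_pmf.expectation ?Pi (\<lambda>c. U (c m) * U (c k)) =
      (if m = k then measure_pmf.expectation P (\<lambda>x. (U x)^2) else 0)"
    if "m < M" "k < M" for m k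
    using that fin mean0
      expectation_Pi_pmf_component[where A="{..<M}" and m=m and d=d and p="\<lambda>_. P" and f="\<lambda>x. (U x)^2"]
      expectation_Pi_pmf_two_components_mult[where A="{..<M}" and m=m and k=k and p="\<lambda>_. P" and f=U and g=U and d=d]
    by (auto simp: power2_eq_square)
  have "measure_pmf.expectation ?Pi (\<lambda>c. (\<Sum>m<M. U (c m))^2) =
        (\<Sum>m<M. \<Sum>k<M. measure_pmf.expectation ?Pi (\<lambda>c. U (c m) * U (c k)))"
    by (simp add: power2_eq_square sum_product int Bochner_Integration.integral_sum)
  also have "\<dots> = real M * measure_pmf.expectation P (\<lambda>x. (U x)^2)"
    by (simp add: cross sum.delta)
  finally show ?thesis .
qed

lemma expectation_abs_empirical_deviation_le:
  fixes f :: "'x \<Rightarrow> real"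
  assumes fin: "finite (set_pmf P)" and M: "M > 0"
  shows "measure_pmf.expectation (Pi_pmf {..<M} d (\<lambda>_. P))
           (\<lambda>c. \<bar>(\<Sum>m<M. f (c m) - measure_pmf.expectation P f) / real M\<bar>)
         \<le> sqrt (measure_pmf.expectation P (\<lambda>x. (f x)^2) / real M)"
proof -
  let ?Pi = "Pi_pmf {..<M} d (\<lambda>_. P)" and ?p = "measure_pmf.expectation P f"
  have intP: "integrable (measure_pmf P) g" for g :: "_ \<Rightarrow> real"
    using fin by (rule integrable_measure_pmf_finite)
  have mean0: "measure_pmf.expectation P (\<lambda>x. f x - ?p) = 0"
    by (simp add: intP prob_space.prob_space measure_pmf.prob_space_axioms)
  have "measure_pmf.expectation ?Pi (\<lambda>c. \<bar>(\<Sum>m<M. f (c m) - ?p) / real M\<bar>)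
      \<le> sqrt (measure_pmf.expectation ?Pi (\<lambda>c. ((\<Sum>m<M. f (c m) - ?p) / real M)^2))"
    using fin by (intro expectation_abs_le_sqrt_second_moment finite_set_Pi_pmf) auto
  also have "measure_pmf.expectation ?Pi (\<lambda>c. ((\<Sum>m<M. f (c m) - ?p) / real M)^2)
      = measure_pmf.expectation ?Pi (\<lambda>c. (\<Sum>m<M. f (c m) - ?p)^2) / (real M)^2"
    by (simp add: power_divide)
  also have "\<dots> = measure_pmf.variance P f / real M"
    using M by (subst second_moment_sum_Pi_pmf[OF fin mean0]) (simp add: power2_eq_square)
  also have "measure_pmf.variance P f \<le> measure_pmf.expectation P (\<lambda>x. (f x)^2)"
    by (subst measure_pmf.variance_eq) (auto simp: intP)
  finally show ?thesis
    using M by (simp add: divide_right_mono order_trans)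
qed

text \<open>Soft covering: truncating \<open>f\<close> at \<open>K\<close> times its mean, the bounded part concentrates by
  the second-moment bound, and the tail contributes at most twice its mass.\<close>

lemma expectation_abs_empirical_mean_le_tail:
  fixes f :: "'x \<Rightarrow> real"
  assumes fin: "finite (set_pmf P)" and f_nonneg: "\<And>x. f x \<ge> 0" and M: "M > 0" and K: "K > 0"
  defines "p \<equiv> measure_pmf.expectation P f"
  shows "measure_pmf.expectation (Pi_pmf {..<M} d (\<lambda>_. P)) (\<lambda>c. \<bar>(\<Sum>m<M. f (c m)) / real M - p\<bar>)
         \<le> 2 * measure_pmf.expectation P (\<lambda>x. if K * p < f x then f x else 0) + sqrt (K / real M) * p"
proof -
  let ?Pi = "Pi_pmf {..<M} d (\<lambda>_. P)"
  have intPi: "integrable (measure_pmf ?Pi) g" for g :: "_ \<Rightarrow> real"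
    using fin by (intro integrable_measure_pmf_finite finite_set_Pi_pmf) auto
  have intP: "integrable (measure_pmf P) g" for g :: "_ \<Rightarrow> real"
    using fin by (rule integrable_measure_pmf_finite)
  define f1 where "f1 = (\<lambda>x. if f x \<le> K * p then f x else 0)"
  define f2 where "f2 = (\<lambda>x. if K * p < f x then f x else 0)"
  define p1 where "p1 = measure_pmf.expectation P f1"
  define p2 where "p2 = measure_pmf.expectation P f2"
  have f_split: "f x = f1 x + f2 x" for x by (auto simp: f1_def f2_def)
  have p_split: "p = p1 + p2" unfolding p_def p1_def p2_def f_split by (simp add: intP)
  have p_nonneg: "p \<ge> 0" unfolding p_def using f_nonneg by (intro integral_nonneg_AE) auto
  have p2_nonneg: "p2 \<ge> 0" unfolding p2_def f2_def using f_nonneg by (intro integral_nonneg_AE) auto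
  have pointwise: "\<bar>(\<Sum>m<M. f (c m)) / real M - p\<bar>
      \<le> \<bar>(\<Sum>m<M. f1 (c m) - p1) / real M\<bar> + (\<Sum>m<M. f2 (c m)) / real M + p2" for c
  proof -
    have "(\<Sum>m<M. f (c m)) / real M - p = (\<Sum>m<M. f1 (c m) - p1) / real M + (\<Sum>m<M. f2 (c m)) / real M - p2"
      using M unfolding f_split p_split by (simp add: sum.distrib sum_subtractf field_simps)
    moreover have "(\<Sum>m<M. f2 (c m)) / real M \<ge> 0"
      using f_nonneg by (intro divide_nonneg_nonneg sum_nonneg) (auto simp: f2_def)
    ultimately show ?thesis using p2_nonneg by linarith
  qed
  have "measure_pmf.expectation P (\<lambda>x. (f1 x)^2) \<le> measure_pmf.expectation P (\<lambda>x. K * p * f1 x)"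
    using f_nonneg by (intro integral_mono intP) (auto simp: f1_def power2_eq_square intro: mult_right_mono)
  also have "\<dots> = K * p * p1" by (simp add: p1_def)
  also have "\<dots> \<le> K * p * p"
    using K p_nonneg p_split p2_nonneg by (intro mult_left_mono) auto
  finally have "sqrt (measure_pmf.expectation P (\<lambda>x. (f1 x)^2) / real M) \<le> sqrt (K * p * p / real M)"
    by (simp add: divide_right_mono)
  also have "\<dots> = sqrt (K / real M) * p"
    using p_nonneg by (simp add: real_sqrt_mult real_sqrt_divide)
  finally have bounded_part: "measure_pmf.expectation ?Pi (\<lambda>c. \<bar>(\<Sum>m<M. f1 (c m) - p1) / real M\<bar>)
      \<le> sqrt (K / real M) * p"
    using expectation_abs_empirical_deviation_le[OF fin M, where f=f1 and d=d] unfolding p1_def by linarith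
  have tail_part: "measure_pmf.expectation ?Pi (\<lambda>c. (\<Sum>m<M. f2 (c m)) / real M) = p2"
    using M by (simp add: intPi Bochner_Integration.integral_sum expectation_Pi_pmf_component p2_def)
  define dev where "dev = (\<lambda>c. \<bar>(\<Sum>m<M. f1 (c m) - p1) / real M\<bar>)"
  define tail where "tail = (\<lambda>c. (\<Sum>m<M. f2 (c m)) / real M)"
  have "measure_pmf.expectation ?Pi (\<lambda>c. \<bar>(\<Sum>m<M. f (c m)) / real M - p\<bar>)
      \<le> measure_pmf.expectation ?Pi (\<lambda>c. dev c + tail c + p2)"
    unfolding dev_def tail_def by (intro integral_mono intPi pointwise)
  also have "\<dots> = measure_pmf.expectation ?Pi dev + measure_pmf.expectation ?Pi tail + p2"
    by (simp add: intPi)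
  also have "\<dots> \<le> sqrt (K / real M) * p + p2 + p2"
    using bounded_part tail_part by (simp add: dev_def tail_def)
  finally show ?thesis unfolding p2_def f2_def by linarith
qed

lemma soft_covering:
  fixes P :: "'x pmf" and w :: "'x \<Rightarrow> 'v \<Rightarrow> real" and V :: "'v set"
  assumes fin: "finite (set_pmf P)" and w_nonneg: "\<And>x v. w x v \<ge> 0" and M: "M > 0" and K: "K > 0"
  defines "pw \<equiv> \<lambda>v. measure_pmf.expectation P (\<lambda>x. w x v)"
  shows "measure_pmf.expectation (Pi_pmf {..<M} d (\<lambda>_. P))
           (\<lambda>c. \<Sum>v\<in>V. \<bar>(\<Sum>m<M. w (c m) v) / real M - pw v\<bar>)
         \<le> 2 * measure_pmf.expectation P (\<lambda>x. \<Sum>v\<in>V. if K * pw v < w x v then w x v else 0)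
           + sqrt (K / real M) * (\<Sum>v\<in>V. pw v)"
proof -
  have int: "integrable (measure_pmf Q) g" if "finite (set_pmf Q)" for Q and g :: "_ \<Rightarrow> real"
    using that by (rule integrable_measure_pmf_finite)
  have "measure_pmf.expectation (Pi_pmf {..<M} d (\<lambda>_. P)) (\<lambda>c. \<Sum>v\<in>V. \<bar>(\<Sum>m<M. w (c m) v) / real M - pw v\<bar>)
      = (\<Sum>v\<in>V. measure_pmf.expectation (Pi_pmf {..<M} d (\<lambda>_. P)) (\<lambda>c. \<bar>(\<Sum>m<M. w (c m) v) / real M - pw v\<bar>))"
    using fin by (intro Bochner_Integration.integral_sum int finite_set_Pi_pmf) auto
  also have "\<dots> \<le> (\<Sum>v\<in>V. 2 * measure_pmf.expectation P (\<lambda>x. if K * pw v < w x v then w x v else 0)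
                          + sqrt (K / real M) * pw v)"
    unfolding pw_def using fin w_nonneg M K by (intro sum_mono expectation_abs_empirical_mean_le_tail)
  also have "\<dots> = 2 * measure_pmf.expectation P (\<lambda>x. \<Sum>v\<in>V. if K * pw v < w x v then w x v else 0)
                  + sqrt (K / real M) * (\<Sum>v\<in>V. pw v)"
    using fin by (simp add: sum.distrib sum_distrib_left Bochner_Integration.integral_sum int)
  finally show ?thesis .
qed

definition threshold_decoder :: "nat \<Rightarrow> (nat \<Rightarrow> real) \<Rightarrow> real \<Rightarrow> nat" where
  "threshold_decoder M s \<theta> =
     (if \<exists>k\<in>{1..M}. \<theta> < s k then LEAST k. k \<in> {1..M} \<and> \<theta> < s k else 1)"

lemma threshold_decoder_exceeds:
  assumes "m \<in> {1..M}" "\<theta> < s m"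
  shows "threshold_decoder M s \<theta> \<in> {1..M} \<and> \<theta> < s (threshold_decoder M s \<theta>)"
proof -
  have "(LEAST k. k \<in> {1..M} \<and> \<theta> < s k) \<in> {1..M} \<and> \<theta> < s (LEAST k. k \<in> {1..M} \<and> \<theta> < s k)"
    using assms by (intro LeastI[of "\<lambda>k. k \<in> {1..M} \<and> \<theta> < s k" m]) auto
  then show ?thesis using assms by (auto simp: threshold_decoder_def)
qed

lemma threshold_decoder_mem:
  assumes "M \<ge> 1"
  shows "threshold_decoder M s \<theta> \<in> {1..M}"
proof (cases "\<exists>k\<in>{1..M}. \<theta> < s k")
  case True
  then show ?thesis using threshold_decoder_exceeds by blast
qed (use assms in \<open>simp add: threshold_decoder_def\<close>)

lemma threshold_decoder_miss_le:
  assumes m: "m \<in> {1..M}" and s_nonneg: "\<And>k. s k \<ge> 0"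
  shows "(if threshold_decoder M s \<theta> \<noteq> m then s m else 0)
         \<le> (if s m \<le> \<theta> then s m else 0) + (\<Sum>k\<in>{1..M} - {m}. if \<theta> < s k then s m else 0)"
proof -
  let ?dec = "threshold_decoder M s \<theta>"
  have sum_nonneg: "0 \<le> (\<Sum>k\<in>{1..M} - {m}. if \<theta> < s k then s m else 0)"
    using s_nonneg by (intro sum_nonneg) auto
  show ?thesis
  proof (cases "?dec \<noteq> m \<and> \<theta> < s m")
    case True
    then have dec: "?dec \<in> {1..M}" "\<theta> < s ?dec"
      using m threshold_decoder_exceeds[OF m] by auto
    then have "(if \<theta> < s ?dec then s m else 0) \<le> (\<Sum>k\<in>{1..M} - {m}. if \<theta> < s k then s m else 0)"
      using True s_nonneg by (intro member_le_sum[where f="\<lambda>k. if \<theta> < s k then s m else 0"]) auto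
    then show ?thesis using True dec by auto
  qed (use sum_nonneg s_nonneg[of m] in auto)
qed

lemma expectation_threshold_decoder_error:
  fixes f :: "'x \<Rightarrow> real"
  assumes fin: "finite (set_pmf P)" and f_nonneg: "\<And>x. f x \<ge> 0" and K: "K > 0"
  defines "p \<equiv> measure_pmf.expectation P f"
  shows "measure_pmf.expectation (Pi_pmf {1..M} d (\<lambda>_. P))
           (\<lambda>c. \<Sum>m\<in>{1..M}. if threshold_decoder M (\<lambda>k. f (c k)) (K * p) \<noteq> m then f (c m) else 0)
         \<le> real M * measure_pmf.expectation P (\<lambda>x. if f x \<le> K * p then f x else 0)
           + real M * (real M - 1) / K * p"
proof -
  let ?Pi = "Pi_pmf {1..M} d (\<lambda>_. P)"
  have intPi: "integrable (measure_pmf ?Pi) g" for g :: "_ \<Rightarrow> real"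
    using fin by (intro integrable_measure_pmf_finite finite_set_Pi_pmf) auto
  have intP: "integrable (measure_pmf P) g" for g :: "_ \<Rightarrow> real"
    using fin by (rule integrable_measure_pmf_finite)
  have p_nonneg: "p \<ge> 0" unfolding p_def using f_nonneg by (intro integral_nonneg_AE) auto
  have collision: "measure_pmf.expectation ?Pi (\<lambda>c. if K * p < f (c k) then f (c m) else 0) \<le> p / K"
    if "m \<in> {1..M}" "k \<in> {1..M}" "k \<noteq> m" for m k
  proof -
    have "measure_pmf.expectation ?Pi (\<lambda>c. if K * p < f (c k) then f (c m) else 0)
        = measure_pmf.expectation ?Pi (\<lambda>c. f (c m) * (if K * p < f (c k) then 1 else 0))"
      by (intro Bochner_Integration.integral_cong) auto
    also have "\<dots> = measure_pmf.expectation P (\<lambda>x. p * (if K * p < f x then 1 else 0))"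
      using that fin expectation_Pi_pmf_two_components_mult[where A="{1..M}" and m=m and k=k
          and d=d and p="\<lambda>_. P" and f=f and g="\<lambda>x. if K * p < f x then 1 else 0"]
      by (simp add: p_def)
    also have "\<dots> \<le> measure_pmf.expectation P (\<lambda>x. f x / K)"
      using K f_nonneg p_nonneg by (intro integral_mono intP) (auto simp: field_simps)
    finally show ?thesis by (simp add: p_def)
  qed
  have "measure_pmf.expectation ?Pi
      (\<lambda>c. \<Sum>m\<in>{1..M}. if threshold_decoder M (\<lambda>k. f (c k)) (K * p) \<noteq> m then f (c m) else 0)
    \<le> measure_pmf.expectation ?Pi (\<lambda>c. \<Sum>m\<in>{1..M}. (if f (c m) \<le> K * p then f (c m) else 0)
        + (\<Sum>k\<in>{1..M} - {m}. if K * p < f (c k) then f (c m) else 0))"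
    using f_nonneg by (intro integral_mono intPi sum_mono threshold_decoder_miss_le)
  also have "\<dots> = (\<Sum>m\<in>{1..M}. measure_pmf.expectation ?Pi (\<lambda>c. if f (c m) \<le> K * p then f (c m) else 0)
      + (\<Sum>k\<in>{1..M} - {m}. measure_pmf.expectation ?Pi (\<lambda>c. if K * p < f (c k) then f (c m) else 0)))"
    by (subst Bochner_Integration.integral_sum[OF intPi], intro sum.cong refl,
        subst Bochner_Integration.integral_add[OF intPi intPi], subst Bochner_Integration.integral_sum[OF intPi])
      (rule refl)
  also have "\<dots> \<le> (\<Sum>m\<in>{1..M}. measure_pmf.expectation P (\<lambda>x. if f x \<le> K * p then f x else 0)
      + (\<Sum>k\<in>{1..M} - {m}. p / K))"
    by (intro sum_mono add_mono collision eq_refl[OF expectation_Pi_pmf_component]) auto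
  also have "\<dots> = real M * measure_pmf.expectation P (\<lambda>x. if f x \<le> K * p then f x else 0)
      + real M * (real M - 1) / K * p"
    using K by (simp add: card_Diff_singleton of_nat_diff field_simps)
  finally show ?thesis .
qed

section \<open>Families of words with small pairwise agreement\<close>

lemma exists_independent_dominating_subset:
  assumes "finite U" "\<And>x. x \<in> U \<Longrightarrow> R x x" "\<And>x y. R x y \<Longrightarrow> R y x"
  shows "\<exists>F\<subseteq>U. (\<forall>f\<in>F. \<forall>g\<in>F. f \<noteq> g \<longrightarrow> \<not> R f g) \<and> (\<forall>g\<in>U. \<exists>f\<in>F. R f g)"
  using assms
proof (induction U rule: finite_induct)
  case (insert x U)
  then obtain F where F: "F \<subseteq> U" "\<forall>f\<in>F. \<forall>g\<in>F. f \<noteq> g \<longrightarrow> \<not> R f g" "\<forall>g\<in>U. \<exists>f\<in>F. R f g"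
    by auto
  show ?case
  proof (cases "\<exists>f\<in>F. R f x")
    case True
    then show ?thesis using F by (intro exI[of _ F]) auto
  next
    case False
    show ?thesis
    proof (intro exI[of _ "insert x F"] conjI)
      show "\<forall>f\<in>insert x F. \<forall>g\<in>insert x F. f \<noteq> g \<longrightarrow> \<not> R f g"
        using F False insert.prems(2) by blast
      show "\<forall>g\<in>insert x U. \<exists>f\<in>insert x F. R f g"
        using F insert.prems(1) by auto
    qed (use F in auto)
  qed
qed auto

definition agreement :: "nat \<Rightarrow> (nat \<Rightarrow> nat) \<Rightarrow> (nat \<Rightarrow> nat) \<Rightarrow> nat" where
  "agreement K f g = card {k\<in>{..<K}. f k = g k}"

lemma card_PiE_fixed_on:
  assumes f: "f \<in> PiE {..<K} (\<lambda>_. {..<q})" and T: "T \<subseteq> {..<K}"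
  shows "card {g\<in>PiE {..<K} (\<lambda>_. {..<q}). \<forall>k\<in>T. g k = f k} = q ^ (K - card T)"
proof -
  have "{g\<in>PiE {..<K} (\<lambda>_. {..<q}). \<forall>k\<in>T. g k = f k} = PiE {..<K} (\<lambda>k. if k \<in> T then {f k} else {..<q})"
    using f T by (auto simp: PiE_def Pi_def split: if_splits)
  also have "card \<dots> = (\<Prod>k\<in>{..<K}. if k \<in> T then 1 else q)"
    by (simp add: card_PiE if_distrib cong: if_cong)
  also have "\<dots> = q ^ card ({..<K} - T)"
    by (simp add: prod.If_cases Int_absorb1[OF T] Diff_eq[symmetric])
  also have "card ({..<K} - T) = K - card T"
    using T by (simp add: card_Diff_subset finite_subset)
  finally show ?thesis .
qed

lemma card_agreement_ge_le:
  assumes f: "f \<in> PiE {..<K} (\<lambda>_. {..<q})"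
  shows "card {g\<in>PiE {..<K} (\<lambda>_. {..<q}). t \<le> agreement K f g} \<le> 2 ^ K * q ^ (K - t)"
proof -
  let ?U = "PiE {..<K} (\<lambda>_. {..<q})"
  let ?Ts = "{T. T \<subseteq> {..<K} \<and> card T = t}"
  have cover: "{g\<in>?U. t \<le> agreement K f g} \<subseteq> (\<Union>T\<in>?Ts. {g\<in>?U. \<forall>k\<in>T. g k = f k})"
  proof
    fix g assume g: "g \<in> {g\<in>?U. t \<le> agreement K f g}"
    then obtain T where "T \<subseteq> {k\<in>{..<K}. f k = g k}" "card T = t"
      by (auto simp: agreement_def elim: obtain_subset_with_card_n)
    then have "T \<in> ?Ts" "g \<in> {g\<in>?U. \<forall>k\<in>T. g k = f k}" using g by auto
    then show "g \<in> (\<Union>T\<in>?Ts. {g\<in>?U. \<forall>k\<in>T. g k = f k})" by blast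
  qed
  have finTs: "finite ?Ts" by (rule finite_subset[of _ "Pow {..<K}"]) auto
  have "card {g\<in>?U. t \<le> agreement K f g} \<le> card (\<Union>T\<in>?Ts. {g\<in>?U. \<forall>k\<in>T. g k = f k})"
    by (intro card_mono cover) (auto intro!: finite_UN_I finTs finite_PiE)
  also have "\<dots> \<le> (\<Sum>T\<in>?Ts. card {g\<in>?U. \<forall>k\<in>T. g k = f k})"
    by (rule card_UN_le[OF finTs])
  also have "\<dots> = (\<Sum>T\<in>?Ts. q ^ (K - t))"
    by (intro sum.cong refl) (auto simp: card_PiE_fixed_on[OF f])
  also have "\<dots> = (K choose t) * q ^ (K - t)"
    using n_subsets[of "{..<K}" t] by simp
  also have "\<dots> \<le> 2 ^ K * q ^ (K - t)"
    by (intro mult_right_mono binomial_le_pow2) auto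
  finally show ?thesis .
qed

text \<open>Gilbert--Varshamov: a maximal family with pairwise agreement below \<open>t\<close> is large,
  since the agreement balls around its members cover all words.\<close>

lemma gilbert_varshamov_family:
  assumes "t \<le> K"
  shows "\<exists>F \<subseteq> PiE {..<K} (\<lambda>_. {..<q}).
           (\<forall>f\<in>F. \<forall>g\<in>F. f \<noteq> g \<longrightarrow> agreement K f g < t) \<and> q ^ K \<le> card F * (2 ^ K * q ^ (K - t))"
proof -
  let ?U = "PiE {..<K} (\<lambda>_. {..<q})"
  have finU: "finite ?U" by (intro finite_PiE) auto
  obtain F where F: "F \<subseteq> ?U" "\<forall>f\<in>F. \<forall>g\<in>F. f \<noteq> g \<longrightarrow> \<not> t \<le> agreement K f g"
      "\<forall>g\<in>?U. \<exists>f\<in>F. t \<le> agreement K f g"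
    using exists_independent_dominating_subset[OF finU, of "\<lambda>f g. t \<le> agreement K f g"] assms
    by (auto simp: agreement_def eq_commute)
  have finF: "finite F" using F(1) finU finite_subset by blast
  have "q ^ K = card ?U" by (simp add: card_PiE)
  also have "\<dots> \<le> card (\<Union>f\<in>F. {g\<in>?U. t \<le> agreement K f g})"
    using F(3) by (intro card_mono finite_UN_I finF) (auto intro: finite_subset[OF _ finU])
  also have "\<dots> \<le> (\<Sum>f\<in>F. card {g\<in>?U. t \<le> agreement K f g})" by (rule card_UN_le[OF finF])
  also have "\<dots> \<le> (\<Sum>f\<in>F. 2 ^ K * q ^ (K - t))"
    using F(1) by (intro sum_mono card_agreement_ge_le) auto
  also have "\<dots> = card F * (2 ^ K * q ^ (K - t))" by simp
  finally show ?thesis using F(1,2) by (meson not_le)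
qed

section \<open>Decision patterns of a family of decoding sets\<close>

text \<open>The sets \<open>D 1, \<dots>, D N\<close> cut the output space into at most \<open>2^N\<close> atoms, indexed by the
  pattern of memberships of an output.  All error probabilities of an identification code
  only depend on the atom of the output, so the output may be replaced by its pattern, which
  ranges over a finite set.\<close>

definition decision_pattern :: "nat \<Rightarrow> (nat \<Rightarrow> 'b set) \<Rightarrow> 'b \<Rightarrow> (nat \<Rightarrow> bool)" where
  "decision_pattern N D y = restrict (\<lambda>i. y \<in> D i) {1..N}"

definition decision_patterns :: "nat \<Rightarrow> (nat \<Rightarrow> bool) set" where
  "decision_patterns N = PiE {1..N} (\<lambda>_. UNIV)"

lemma finite_decision_patterns: "finite (decision_patterns N)"
  unfolding decision_patterns_def by (intro finite_PiE) auto

lemma decision_pattern_mem: "decision_pattern N D y \<in> decision_patterns N"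
  by (simp add: decision_pattern_def decision_patterns_def)

lemma sets_decision_pattern_atom:
  assumes D: "\<forall>i\<in>{1..N}. D i \<in> sets Yn"
  shows "decision_pattern N D -` {v} \<inter> space Yn \<in> sets Yn"
proof (cases "v \<in> decision_patterns N")
  case True
  have "{y\<in>space Yn. (y \<in> D i) = v i} \<in> sets Yn" if "i \<in> {1..N}" for i
  proof -
    have "{y\<in>space Yn. (y \<in> D i) = v i} = (if v i then D i \<inter> space Yn else space Yn - D i)"
      by auto
    then show ?thesis using D that by auto
  qed
  then have "{y\<in>space Yn. \<forall>i\<in>{1..N}. (y \<in> D i) = v i} \<in> sets Yn"
    by (intro sets.sets_Collect_finite_All) auto
  moreover have "decision_pattern N D -` {v} \<inter> space Yn = {y\<in>space Yn. \<forall>i\<in>{1..N}. (y \<in> D i) = v i}"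
    using True by (auto simp: decision_pattern_def decision_patterns_def PiE_def extensional_def fun_eq_iff)
  ultimately show ?thesis by simp
next
  case False
  then have "decision_pattern N D -` {v} \<inter> space Yn = {}"
    using decision_pattern_mem[of N D] by auto
  then show ?thesis by simp
qed

lemma decision_pattern_vimage_eq_UN:
  "decision_pattern N D -` G \<inter> space Yn
     = (\<Union>v\<in>G \<inter> decision_patterns N. decision_pattern N D -` {v} \<inter> space Yn)"
  using decision_pattern_mem[of N D] by auto

lemma sets_decision_pattern_vimage:
  assumes D: "\<forall>i\<in>{1..N}. D i \<in> sets Yn"
  shows "decision_pattern N D -` G \<inter> space Yn \<in> sets Yn"
  using sets_decision_pattern_atom[OF D] finite_decision_patterns
  by (subst decision_pattern_vimage_eq_UN) (intro sets.finite_UN, auto)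

lemma measure_decision_pattern_vimage:
  assumes D: "\<forall>i\<in>{1..N}. D i \<in> sets Yn"
    and "finite_measure Wx" and S: "sets Wx = sets Yn"
  shows "measure Wx (decision_pattern N D -` G \<inter> space Yn)
           = (\<Sum>v\<in>G \<inter> decision_patterns N. measure Wx (decision_pattern N D -` {v} \<inter> space Yn))"
proof -
  interpret finite_measure Wx by fact
  show ?thesis
    using sets_decision_pattern_atom[OF D] finite_decision_patterns S
    by (subst decision_pattern_vimage_eq_UN)
      (intro finite_measure_finite_Union, auto simp: disjoint_family_on_def)
qed

lemma measure_decoding_set_decision_patterns:
  assumes D: "\<forall>i\<in>{1..N}. D i \<in> sets Yn" and i: "i \<in> {1..N}"
    and W: "finite_measure Wx" and S: "sets Wx = sets Yn"
  shows "measure Wx (D i)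
           = (\<Sum>v\<in>{v. v i} \<inter> decision_patterns N. measure Wx (decision_pattern N D -` {v} \<inter> space Yn))"
    and "measure Wx (space Yn - D i)
           = (\<Sum>v\<in>{v. \<not> v i} \<inter> decision_patterns N. measure Wx (decision_pattern N D -` {v} \<inter> space Yn))"
proof -
  have "D i = decision_pattern N D -` {v. v i} \<inter> space Yn"
    using i sets.sets_into_space[of "D i" Yn] D by (auto simp: decision_pattern_def)
  then show "measure Wx (D i)
      = (\<Sum>v\<in>{v. v i} \<inter> decision_patterns N. measure Wx (decision_pattern N D -` {v} \<inter> space Yn))"
    by (subst (1) \<open>D i = _\<close>) (rule measure_decision_pattern_vimage[OF D W S])
  have "space Yn - D i = decision_pattern N D -` {v. \<not> v i} \<inter> space Yn"
    using i by (auto simp: decision_pattern_def)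
  then show "measure Wx (space Yn - D i)
      = (\<Sum>v\<in>{v. \<not> v i} \<inter> decision_patterns N. measure Wx (decision_pattern N D -` {v} \<inter> space Yn))"
    by (subst (1) \<open>space Yn - D i = _\<close>) (rule measure_decision_pattern_vimage[OF D W S])
qed

lemma sum_measure_decision_pattern_atoms:
  assumes D: "\<forall>i\<in>{1..N}. D i \<in> sets Yn"
    and W: "prob_space Wx" and S: "sets Wx = sets Yn"
  shows "(\<Sum>v\<in>decision_patterns N. measure Wx (decision_pattern N D -` {v} \<inter> space Yn)) = 1"
proof -
  interpret prob_space Wx by fact
  have "(\<Sum>v\<in>decision_patterns N. measure Wx (decision_pattern N D -` {v} \<inter> space Yn))
      = measure Wx (decision_pattern N D -` UNIV \<inter> space Yn)"
    using measure_decision_pattern_vimage[OF D finite_measure_axioms S, where G=UNIV] by simp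
  also have "\<dots> = prob (space Wx)" using sets_eq_imp_space_eq[OF S] by simp
  also have "\<dots> = 1" by (rule prob_space)
  finally show ?thesis .
qed

lemma measurable_decision_pattern_decoder:
  fixes M :: nat
  assumes D: "\<forall>i\<in>{1..N}. D i \<in> sets Yn"
    and g: "\<And>v. v \<in> decision_patterns N \<Longrightarrow> g v \<in> {1..M}"
  shows "(\<lambda>y. g (decision_pattern N D y)) \<in> measurable Yn (count_space {1..M})"
proof -
  have "(\<lambda>y. g (decision_pattern N D y)) \<in> space Yn \<rightarrow> {1..M}"
    using g[OF decision_pattern_mem] by (intro Pi_I)
  moreover have "(\<lambda>y. g (decision_pattern N D y)) -` {a} \<inter> space Yn \<in> sets Yn" for a
  proof -
    have "(\<lambda>y. g (decision_pattern N D y)) -` {a} \<inter> space Yn = decision_pattern N D -` {v. g v = a} \<inter> space Yn"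
      by auto
    then show ?thesis
      using sets_decision_pattern_vimage[OF D, where G="{v. g v = a}"] by simp
  qed
  ultimately show ?thesis by (subst measurable_count_space_eq2) auto
qed

lemma measure_decision_pattern_decoder_error:
  assumes D: "\<forall>i\<in>{1..N}. D i \<in> sets Yn"
    and W: "finite_measure Wx" and S: "sets Wx = sets Yn"
  shows "measure Wx (space Yn - (\<lambda>y. g (decision_pattern N D y)) -` {a})
    = (\<Sum>v\<in>decision_patterns N. if g v \<noteq> a then measure Wx (decision_pattern N D -` {v} \<inter> space Yn) else 0)"
proof -
  have "space Yn - (\<lambda>y. g (decision_pattern N D y)) -` {a} = decision_pattern N D -` {v. g v \<noteq> a} \<inter> space Yn"
    by auto
  then show ?thesis
    using measure_decision_pattern_vimage[OF D W S, where G="{v. g v \<noteq> a}"] finite_decision_patterns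
    by (simp add: sum.If_cases Int_commute)
qed

section \<open>Identification codes seen through decision patterns\<close>

lemma finite_cost_set: "finite (cost_set c \<Gamma> n :: ('a::finite) list set)"
proof (rule finite_subset)
  show "cost_set c \<Gamma> n \<subseteq> {xs. set xs \<subseteq> UNIV \<and> length xs = n}" by (auto simp: cost_set_def)
qed (rule finite_lists_length_eq, simp)

lemma length_cost_set: "x \<in> cost_set c \<Gamma> n \<Longrightarrow> length x = n"
  by (simp add: cost_set_def)

lemma general_channel_prob_space: "general_channel W Y \<Longrightarrow> length x = n \<Longrightarrow> prob_space (W n x)"
  and general_channel_sets: "general_channel W Y \<Longrightarrow> length x = n \<Longrightarrow> sets (W n x) = sets (Y n)"
  by (auto simp: general_channel_def)

lemma finite_set_pmf_cost_set:
  "set_pmf P \<subseteq> cost_set c \<Gamma> n \<Longrightarrow> finite (set_pmf (P :: ('a::finite) list pmf))"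
  using finite_cost_set finite_subset by metis

definition pattern_prob ::
  "(nat \<Rightarrow> 'a list \<Rightarrow> 'b measure) \<Rightarrow> (nat \<Rightarrow> 'b measure) \<Rightarrow> nat \<Rightarrow> nat \<Rightarrow> (nat \<Rightarrow> 'b set)
   \<Rightarrow> 'a list \<Rightarrow> (nat \<Rightarrow> bool) \<Rightarrow> real" where
  "pattern_prob W Y n N D x v = measure (W n x) (decision_pattern N D -` {v} \<inter> space (Y n))"

definition pattern_outprob ::
  "(nat \<Rightarrow> 'a list \<Rightarrow> 'b measure) \<Rightarrow> (nat \<Rightarrow> 'b measure) \<Rightarrow> nat \<Rightarrow> nat \<Rightarrow> (nat \<Rightarrow> 'b set)
   \<Rightarrow> 'a list pmf \<Rightarrow> (nat \<Rightarrow> bool) \<Rightarrow> real" where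
  "pattern_outprob W Y n N D P v = measure_pmf.expectation P (\<lambda>x. pattern_prob W Y n N D x v)"

text \<open>The probability, under input distribution \<open>P\<close> and the channel, that the likelihood
  ratio of the output pattern exceeds \<open>K\<close> (an information spectrum tail).\<close>

definition pattern_tail ::
  "(nat \<Rightarrow> 'a list \<Rightarrow> 'b measure) \<Rightarrow> (nat \<Rightarrow> 'b measure) \<Rightarrow> nat \<Rightarrow> nat \<Rightarrow> (nat \<Rightarrow> 'b set)
   \<Rightarrow> real \<Rightarrow> 'a list pmf \<Rightarrow> real" where
  "pattern_tail W Y n N D K P = measure_pmf.expectation P (\<lambda>x. \<Sum>v\<in>decision_patterns N.
      if K * pattern_outprob W Y n N D P v < pattern_prob W Y n N D x v
      then pattern_prob W Y n N D x v else 0)"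

lemma pattern_prob_nonneg: "pattern_prob W Y n N D x v \<ge> 0"
  by (simp add: pattern_prob_def)

lemma sum_pattern_prob:
  assumes "general_channel W Y" "\<forall>i\<in>{1..N}. D i \<in> sets (Y n)" "length x = n"
  shows "(\<Sum>v\<in>decision_patterns N. pattern_prob W Y n N D x v) = 1"
  unfolding pattern_prob_def using assms
  by (intro sum_measure_decision_pattern_atoms general_channel_prob_space general_channel_sets)

lemma sum_pattern_outprob:
  fixes W :: "nat \<Rightarrow> ('a::finite) list \<Rightarrow> 'b measure"
  assumes gc: "general_channel W Y" and D: "\<forall>i\<in>{1..N}. D i \<in> sets (Y n)"
    and P: "set_pmf P \<subseteq> cost_set c \<Gamma> n"
  shows "(\<Sum>v\<in>decision_patterns N. pattern_outprob W Y n N D P v) = 1"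
proof -
  have "(\<Sum>v\<in>decision_patterns N. pattern_outprob W Y n N D P v)
      = measure_pmf.expectation P (\<lambda>x. \<Sum>v\<in>decision_patterns N. pattern_prob W Y n N D x v)"
    unfolding pattern_outprob_def using finite_set_pmf_cost_set[OF P]
    by (intro Bochner_Integration.integral_sum[symmetric] integrable_measure_pmf_finite)
  also have "\<dots> = measure_pmf.expectation P (\<lambda>x. 1)"
    using P by (intro expectation_cong_set_pmf sum_pattern_prob[OF gc D]) (auto intro: length_cost_set)
  finally show ?thesis by simp
qed

lemma outprob_decoding_set_patterns:
  fixes W :: "nat \<Rightarrow> ('a::finite) list \<Rightarrow> 'b measure"
  assumes gc: "general_channel W Y" and D: "\<forall>i\<in>{1..N}. D i \<in> sets (Y n)"
    and P: "set_pmf P \<subseteq> cost_set c \<Gamma> n" and i: "i \<in> {1..N}"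
  shows "outprob W n P (D i) = (\<Sum>v\<in>{v. v i} \<inter> decision_patterns N. pattern_outprob W Y n N D P v)"
    and "outprob W n P (space (Y n) - D i)
           = (\<Sum>v\<in>{v. \<not> v i} \<inter> decision_patterns N. pattern_outprob W Y n N D P v)"
proof -
  have int: "integrable (measure_pmf P) f" for f :: "_ \<Rightarrow> real"
    using finite_set_pmf_cost_set[OF P] by (rule integrable_measure_pmf_finite)
  have W: "finite_measure (W n x)" "sets (W n x) = sets (Y n)" if "x \<in> set_pmf P" for x
    using that P gc by (auto intro!: prob_space.finite_measure general_channel_prob_space
        general_channel_sets dest!: length_cost_set)
  show "outprob W n P (D i) = (\<Sum>v\<in>{v. v i} \<inter> decision_patterns N. pattern_outprob W Y n N D P v)"
    unfolding outprob_def pattern_outprob_def pattern_prob_def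
    by (subst Bochner_Integration.integral_sum[symmetric], rule int,
        intro expectation_cong_set_pmf measure_decoding_set_decision_patterns(1)[OF D i] W)
  show "outprob W n P (space (Y n) - D i)
      = (\<Sum>v\<in>{v. \<not> v i} \<inter> decision_patterns N. pattern_outprob W Y n N D P v)"
    unfolding outprob_def pattern_outprob_def pattern_prob_def
    by (subst Bochner_Integration.integral_sum[symmetric], rule int,
        intro expectation_cong_set_pmf measure_decoding_set_decision_patterns(2)[OF D i] W)
qed

lemma pattern_tail_complement:
  fixes W :: "nat \<Rightarrow> ('a::finite) list \<Rightarrow> 'b measure"
  assumes gc: "general_channel W Y" and D: "\<forall>i\<in>{1..N}. D i \<in> sets (Y n)"
    and P: "set_pmf P \<subseteq> cost_set c \<Gamma> n"
  shows "measure_pmf.expectation P (\<lambda>x. \<Sum>v\<in>decision_patterns N.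
      if pattern_prob W Y n N D x v \<le> K * pattern_outprob W Y n N D P v
      then pattern_prob W Y n N D x v else 0)
    = 1 - pattern_tail W Y n N D K P"
proof -
  let ?w = "pattern_prob W Y n N D" and ?pw = "pattern_outprob W Y n N D P"
  have "measure_pmf.expectation P (\<lambda>x. \<Sum>v\<in>decision_patterns N. if ?w x v \<le> K * ?pw v then ?w x v else 0)
      = measure_pmf.expectation P (\<lambda>x. 1 - (\<Sum>v\<in>decision_patterns N. if K * ?pw v < ?w x v then ?w x v else 0))"
  proof (rule expectation_cong_set_pmf)
    fix x assume x: "x \<in> set_pmf P"
    have "(\<Sum>v\<in>decision_patterns N. if ?w x v \<le> K * ?pw v then ?w x v else 0)
        + (\<Sum>v\<in>decision_patterns N. if K * ?pw v < ?w x v then ?w x v else 0)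
        = (\<Sum>v\<in>decision_patterns N. ?w x v)"
      by (subst sum.distrib[symmetric]) (intro sum.cong refl, auto)
    also have "\<dots> = 1" using x P by (intro sum_pattern_prob[OF gc D]) (auto intro: length_cost_set)
    finally show "(\<Sum>v\<in>decision_patterns N. if ?w x v \<le> K * ?pw v then ?w x v else 0)
        = 1 - (\<Sum>v\<in>decision_patterns N. if K * ?pw v < ?w x v then ?w x v else 0)"
      by linarith
  qed
  also have "\<dots> = 1 - pattern_tail W Y n N D K P"
    unfolding pattern_tail_def using finite_set_pmf_cost_set[OF P]
    by (subst Bochner_Integration.integral_diff) (auto intro: integrable_measure_pmf_finite)
  finally show ?thesis .
qed

lemma expectation_pattern_decoder_error:
  fixes W :: "nat \<Rightarrow> ('a::finite) list \<Rightarrow> 'b measure"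
  assumes gc: "general_channel W Y" and D: "\<forall>i\<in>{1..N}. D i \<in> sets (Y n)"
    and P: "set_pmf P \<subseteq> cost_set c \<Gamma> n" and K: "K > 0"
  shows "measure_pmf.expectation (Pi_pmf {1..M} d (\<lambda>_. P)) (\<lambda>cb. \<Sum>m\<in>{1..M}. \<Sum>v\<in>decision_patterns N.
           if threshold_decoder M (\<lambda>k. pattern_prob W Y n N D (cb k) v) (K * pattern_outprob W Y n N D P v) \<noteq> m
           then pattern_prob W Y n N D (cb m) v else 0)
         \<le> real M * (1 - pattern_tail W Y n N D K P) + real M * (real M - 1) / K"
proof -
  let ?w = "pattern_prob W Y n N D" and ?pw = "pattern_outprob W Y n N D P"
  let ?Pi = "Pi_pmf {1..M} d (\<lambda>_. P)"
  have fin: "finite (set_pmf P)" by (rule finite_set_pmf_cost_set[OF P])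
  have int: "integrable (measure_pmf Q) g" if "finite (set_pmf Q)" for Q and g :: "_ \<Rightarrow> real"
    using that by (rule integrable_measure_pmf_finite)
  have "measure_pmf.expectation ?Pi (\<lambda>cb. \<Sum>m\<in>{1..M}. \<Sum>v\<in>decision_patterns N.
           if threshold_decoder M (\<lambda>k. ?w (cb k) v) (K * ?pw v) \<noteq> m then ?w (cb m) v else 0)
      = (\<Sum>v\<in>decision_patterns N. measure_pmf.expectation ?Pi (\<lambda>cb. \<Sum>m\<in>{1..M}.
           if threshold_decoder M (\<lambda>k. ?w (cb k) v) (K * ?pw v) \<noteq> m then ?w (cb m) v else 0))"
    using fin by (subst sum.swap) (intro Bochner_Integration.integral_sum int finite_set_Pi_pmf, auto)
  also have "\<dots> \<le> (\<Sum>v\<in>decision_patterns N. real M * measure_pmf.expectation P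
           (\<lambda>x. if ?w x v \<le> K * ?pw v then ?w x v else 0) + real M * (real M - 1) / K * ?pw v)"
    unfolding pattern_outprob_def
    using fin K pattern_prob_nonneg by (intro sum_mono expectation_threshold_decoder_error)
  also have "\<dots> = real M * measure_pmf.expectation P (\<lambda>x. \<Sum>v\<in>decision_patterns N.
           if ?w x v \<le> K * ?pw v then ?w x v else 0) + real M * (real M - 1) / K * (\<Sum>v\<in>decision_patterns N. ?pw v)"
    using fin by (simp add: sum.distrib sum_distrib_left Bochner_Integration.integral_sum int)
  also have "\<dots> = real M * (1 - pattern_tail W Y n N D K P) + real M * (real M - 1) / K"
    by (simp add: pattern_tail_complement[OF gc D P] sum_pattern_outprob[OF gc D P])
  finally show ?thesis .
qed

lemma tcode_of_large_pattern_tail: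
  fixes W :: "nat \<Rightarrow> ('a::finite) list \<Rightarrow> 'b measure"
  assumes gc: "general_channel W Y" and D: "\<forall>i\<in>{1..N}. D i \<in> sets (Y n)"
    and P: "set_pmf P \<subseteq> cost_set c \<Gamma> n" and K: "K > 0" and M: "M \<ge> 1"
    and tail: "\<alpha> \<le> pattern_tail W Y n N D K P"
  shows "\<exists>\<phi> \<psi> \<epsilon>. tcode W Y c \<Gamma> n M \<phi> \<psi> \<epsilon> \<and> \<epsilon> \<le> 1 - \<alpha> + real M / K"
proof -
  let ?w = "pattern_prob W Y n N D" and ?pw = "pattern_outprob W Y n N D P"
  let ?dec = "\<lambda>cb v. threshold_decoder M (\<lambda>k. ?w (cb k) v) (K * ?pw v)"
  let ?Pi = "Pi_pmf {1..M} undefined (\<lambda>_. P)"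
  let ?err = "\<lambda>cb. \<Sum>m\<in>{1..M}. \<Sum>v\<in>decision_patterns N. if ?dec cb v \<noteq> m then ?w (cb m) v else 0"
  obtain cb where cb: "cb \<in> set_pmf ?Pi" "?err cb \<le> measure_pmf.expectation ?Pi ?err"
    using exists_in_set_pmf_le_expectation[of ?Pi ?err] finite_set_pmf_cost_set[OF P]
    by (auto intro: finite_set_Pi_pmf)
  have cb_cost: "cb m \<in> cost_set c \<Gamma> n" if "m \<in> {1..M}" for m
    using set_Pi_pmf_component[OF _ cb(1) that] P by auto
  have W_cb: "finite_measure (W n (cb m)) \<and> sets (W n (cb m)) = sets (Y n)" if "m \<in> {1..M}" for m
    using gc length_cost_set[OF cb_cost[OF that]]
    by (simp add: general_channel_sets general_channel_prob_space prob_space.finite_measure)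
  define \<psi> where "\<psi> = (\<lambda>y. ?dec cb (decision_pattern N D y))"
  define \<epsilon> where "\<epsilon> = (\<Sum>i=1..M. measure (W n (cb i)) (space (Y n) - \<psi> -` {i})) / real M"
  have "\<psi> \<in> measurable (Y n) (count_space {1..M})"
    unfolding \<psi>_def by (rule measurable_decision_pattern_decoder[OF D threshold_decoder_mem[OF M]])
  then have "tcode W Y c \<Gamma> n M cb \<psi> \<epsilon>"
    unfolding tcode_def \<epsilon>_def using M cb_cost by auto
  moreover have "\<epsilon> = ?err cb / real M"
    unfolding \<epsilon>_def \<psi>_def pattern_prob_def
    by (intro arg_cong2[where f="(/)"] sum.cong refl measure_decision_pattern_decoder_error[OF D])
      (simp_all add: W_cb)
  moreover have "?err cb / real M \<le> 1 - \<alpha> + real M / K"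
  proof -
    have "?err cb \<le> real M * (1 - pattern_tail W Y n N D K P) + real M * (real M - 1) / K"
      using cb(2) expectation_pattern_decoder_error[OF gc D P K] by (rule order_trans)
    moreover have "real M * (1 - pattern_tail W Y n N D K P) \<le> real M * (1 - \<alpha>)"
      using tail by (intro mult_left_mono) auto
    moreover have "real M * (real M - 1) / K \<le> real M * real M / K"
      using K by (intro divide_right_mono mult_left_mono) auto
    ultimately have "?err cb \<le> real M * (1 - \<alpha> + real M / K)"
      by (simp add: algebra_simps)
    then show ?thesis using M by (simp add: divide_le_eq mult.commute)
  qed
  ultimately show ?thesis by blast
qed

lemma exists_codebook_approximating_pattern_outprob:
  fixes W :: "nat \<Rightarrow> ('a::finite) list \<Rightarrow> 'b measure"
  assumes gc: "general_channel W Y" and D: "\<forall>i\<in>{1..N}. D i \<in> sets (Y n)"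
    and P: "set_pmf P \<subseteq> cost_set c \<Gamma> n" and K: "K > 0" and Ms: "Ms > 0"
    and tail: "pattern_tail W Y n N D K P \<le> \<alpha>"
  shows "\<exists>cb\<in>PiE_dflt {..<Ms} undefined (\<lambda>_. {xs. length xs = n}).
     (\<Sum>v\<in>decision_patterns N. \<bar>(\<Sum>m<Ms. pattern_prob W Y n N D (cb m) v) / real Ms
        - pattern_outprob W Y n N D P v\<bar>) \<le> 2 * \<alpha> + sqrt (K / real Ms)"
proof -
  let ?Pi = "Pi_pmf {..<Ms} undefined (\<lambda>_. P)"
  let ?F = "\<lambda>cb. \<Sum>v\<in>decision_patterns N. \<bar>(\<Sum>m<Ms. pattern_prob W Y n N D (cb m) v) / real Ms
        - pattern_outprob W Y n N D P v\<bar>"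
  have fin: "finite (set_pmf P)" by (rule finite_set_pmf_cost_set[OF P])
  have "measure_pmf.expectation ?Pi ?F \<le> 2 * pattern_tail W Y n N D K P
      + sqrt (K / real Ms) * (\<Sum>v\<in>decision_patterns N. pattern_outprob W Y n N D P v)"
    unfolding pattern_outprob_def pattern_tail_def using fin pattern_prob_nonneg Ms K by (rule soft_covering)
  also have "\<dots> \<le> 2 * \<alpha> + sqrt (K / real Ms)"
    using tail by (simp add: sum_pattern_outprob[OF gc D P])
  finally have E: "measure_pmf.expectation ?Pi ?F \<le> 2 * \<alpha> + sqrt (K / real Ms)" .
  obtain cb where cb: "cb \<in> set_pmf ?Pi" "?F cb \<le> measure_pmf.expectation ?Pi ?F"
    using exists_in_set_pmf_le_expectation[of ?Pi ?F] fin by (auto intro: finite_set_Pi_pmf)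
  have "cb \<in> PiE_dflt {..<Ms} undefined (\<lambda>_. {xs. length xs = n})"
    using cb(1) P by (auto simp: set_Pi_pmf PiE_dflt_def dest!: length_cost_set)
  then show ?thesis using cb(2) E by (intro bexI[of _ cb]) auto
qed

lemma idcode_outprob_miss_le:
  assumes "idcode W Y c \<Gamma> n N Q D mu_n lam_n" "mu_n \<le> ereal a" "i \<in> {1..N}"
  shows "outprob W n (Q i) (space (Y n) - D i) \<le> a"
proof -
  have "ereal (outprob W n (Q i) (space (Y n) - D i)) \<le> mu_n"
    using assms(1,3) unfolding idcode_def by (auto intro: SUP_upper)
  then have "ereal (outprob W n (Q i) (space (Y n) - D i)) \<le> ereal a" using assms(2) by (rule order_trans)
  then show ?thesis by simp
qed

lemma idcode_outprob_false_le:
  assumes "idcode W Y c \<Gamma> n N Q D mu_n lam_n" "lam_n \<le> ereal b"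
    and "i \<in> {1..N}" "j \<in> {1..N}" "i \<noteq> j"
  shows "outprob W n (Q j) (D i) \<le> b"
proof -
  let ?f = "\<lambda>ij. ereal (outprob W n (Q (snd ij)) (D (fst ij)))"
  have "(i, j) \<in> {(i, j). i \<in> {1..N} \<and> j \<in> {1..N} \<and> i \<noteq> j}" using assms(3-5) by simp
  then have "?f (i, j) \<le> (SUP ij\<in>{(i, j). i \<in> {1..N} \<and> j \<in> {1..N} \<and> i \<noteq> j}. ?f ij)"
    by (rule SUP_upper)
  then have "ereal (outprob W n (Q j) (D i)) \<le> (SUP ij\<in>{(i, j). i \<in> {1..N} \<and> j \<in> {1..N} \<and> i \<noteq> j}. ?f ij)"
    by simp
  also have "\<dots> = lam_n" using assms(1) by (simp add: idcode_def)
  finally have "ereal (outprob W n (Q j) (D i)) \<le> ereal b" using assms(2) by (rule order_trans)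
  then show ?thesis by simp
qed

lemma idcode_pattern_outprob_distance:
  fixes W :: "nat \<Rightarrow> ('a::finite) list \<Rightarrow> 'b measure"
  assumes gc: "general_channel W Y" and ic: "idcode W Y c \<Gamma> n N Q D mu_n lam_n"
    and mu: "mu_n \<le> ereal a" and lam: "lam_n \<le> ereal b"
    and i: "i \<in> {1..N}" and j: "j \<in> {1..N}" and "i \<noteq> j"
  shows "1 - a - b \<le> (\<Sum>v\<in>decision_patterns N.
           \<bar>pattern_outprob W Y n N D (Q i) v - pattern_outprob W Y n N D (Q j) v\<bar>)"
proof -
  let ?pi = "pattern_outprob W Y n N D (Q i)" and ?pj = "pattern_outprob W Y n N D (Q j)"
  let ?S = "{v. v i} \<inter> decision_patterns N" and ?S' = "{v. \<not> v i} \<inter> decision_patterns N"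
  have D: "\<forall>i\<in>{1..N}. D i \<in> sets (Y n)" and Q: "\<forall>i\<in>{1..N}. set_pmf (Q i) \<subseteq> cost_set c \<Gamma> n"
    using ic by (auto simp: idcode_def)
  have Qi: "set_pmf (Q i) \<subseteq> cost_set c \<Gamma> n" and Qj: "set_pmf (Q j) \<subseteq> cost_set c \<Gamma> n"
    using Q i j by auto
  have "sum ?pi (decision_patterns N) = sum ?pi (?S \<union> ?S')" by (intro sum.cong) auto
  also have "\<dots> = sum ?pi ?S + sum ?pi ?S'"
    using finite_decision_patterns[of N] by (intro sum.union_disjoint) auto
  finally have "sum ?pi ?S + sum ?pi ?S' = 1" using sum_pattern_outprob[OF gc D Qi] by simp
  moreover have "sum ?pi ?S' \<le> a"
    using idcode_outprob_miss_le[OF ic mu i] unfolding outprob_decoding_set_patterns(2)[OF gc D Qi i] .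
  moreover have "sum ?pj ?S \<le> b"
    using idcode_outprob_false_le[OF ic lam i j \<open>i \<noteq> j\<close>]
    unfolding outprob_decoding_set_patterns(1)[OF gc D Qj i] .
  ultimately have "1 - a - b \<le> (\<Sum>v\<in>?S. ?pi v - ?pj v)" by (simp add: sum_subtractf)
  also have "\<dots> \<le> (\<Sum>v\<in>?S. \<bar>?pi v - ?pj v\<bar>)" by (intro sum_mono) simp
  also have "\<dots> \<le> (\<Sum>v\<in>decision_patterns N. \<bar>?pi v - ?pj v\<bar>)"
    using finite_decision_patterns[of N] by (intro sum_mono2) auto
  finally show ?thesis .
qed

text \<open>Soft covering replaces each input distribution by the empirical distribution of \<open>Ms\<close>
  codewords; distinct messages need distinct codebooks, which bounds their number.\<close>

lemma idcode_card_le_of_small_pattern_tails: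
  fixes W :: "nat \<Rightarrow> ('a::finite) list \<Rightarrow> 'b measure"
  assumes gc: "general_channel W Y" and ic: "idcode W Y c \<Gamma> n N Q D mu_n lam_n"
    and K: "K > 0" and Ms: "Ms > 0"
    and tails: "\<forall>i\<in>{1..N}. pattern_tail W Y n N D K (Q i) \<le> \<alpha>"
    and mu: "mu_n \<le> ereal a" and lam: "lam_n \<le> ereal b"
    and small: "2 * (2 * \<alpha> + sqrt (K / real Ms)) < 1 - a - b"
  shows "N \<le> (CARD('a) ^ n) ^ Ms"
proof -
  let ?\<eta> = "2 * \<alpha> + sqrt (K / real Ms)"
  let ?T = "PiE_dflt {..<Ms} undefined (\<lambda>_. {xs::'a list. length xs = n})"
  let ?pw = "\<lambda>i. pattern_outprob W Y n N D (Q i)"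
  let ?emp = "\<lambda>cb v. (\<Sum>m<Ms. pattern_prob W Y n N D (cb m) v) / real Ms"
  have D: "\<forall>i\<in>{1..N}. D i \<in> sets (Y n)" and Q: "\<forall>i\<in>{1..N}. set_pmf (Q i) \<subseteq> cost_set c \<Gamma> n"
    using ic by (auto simp: idcode_def)
  let ?good = "\<lambda>i cb. cb \<in> ?T \<and> (\<Sum>v\<in>decision_patterns N. \<bar>?emp cb v - ?pw i v\<bar>) \<le> ?\<eta>"
  have "\<exists>cb. ?good i cb" if "i \<in> {1..N}" for i
  proof -
    have "set_pmf (Q i) \<subseteq> cost_set c \<Gamma> n" "pattern_tail W Y n N D K (Q i) \<le> \<alpha>"
      using Q tails that by auto
    then show ?thesis using exists_codebook_approximating_pattern_outprob[OF gc D _ K Ms] by blast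
  qed
  then obtain cbf where cbf: "\<And>i. i \<in> {1..N} \<Longrightarrow> ?good i (cbf i)"
    using someI_ex[of "?good _"] by (intro that[of "\<lambda>i. SOME cb. ?good i cb"]) blast
  have "inj_on cbf {1..N}"
  proof (rule inj_onI, rule ccontr)
    fix i j assume i: "i \<in> {1..N}" and j: "j \<in> {1..N}" and eq: "cbf i = cbf j" and "i \<noteq> j"
    have "(\<Sum>v\<in>decision_patterns N. \<bar>?pw i v - ?pw j v\<bar>)
        \<le> (\<Sum>v\<in>decision_patterns N. \<bar>?emp (cbf i) v - ?pw i v\<bar> + \<bar>?emp (cbf j) v - ?pw j v\<bar>)"
      unfolding eq by (intro sum_mono) linarith
    also have "\<dots> \<le> 2 * ?\<eta>" using cbf[OF i] cbf[OF j] by (simp add: sum.distrib)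
    finally show False
      using idcode_pattern_outprob_distance[OF gc ic mu lam i j \<open>i \<noteq> j\<close>] small by linarith
  qed
  then have "N = card (cbf ` {1..N})" by (simp add: card_image)
  also have "\<dots> \<le> card ?T"
    using cbf finite_lists_length_eq[of "UNIV :: 'a set" n] by (intro card_mono finite_PiE_dflt) auto
  also have "\<dots> = (CARD('a) ^ n) ^ Ms"
    using finite_lists_length_eq[of "UNIV :: 'a set" n] card_lists_length_eq[of "UNIV :: 'a set" n]
    by (simp add: card_PiE_dflt)
  finally show ?thesis .
qed

section \<open>Converse: identification rate at most \<open>C\<^sub>s\<close>\<close>

lemma tcode_constant:
  assumes "x0 \<in> cost_set c \<Gamma> n" "M \<ge> 1"
  shows "tcode W Y c \<Gamma> n M (\<lambda>_. x0) (\<lambda>_. 1)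
           ((\<Sum>i=1..M. measure (W n x0) (space (Y n) - (\<lambda>_. 1::nat) -` {i})) / real M)"
  using assms unfolding tcode_def by auto

lemma Cs_nonneg:
  assumes ne: "\<forall>n\<ge>1. cost_set c \<Gamma> n \<noteq> {}"
  shows "Cs W Y c \<Gamma> \<ge> 0"
proof -
  define x0 where "x0 n = (SOME x. x \<in> cost_set c \<Gamma> n)" for n
  have x0: "\<forall>n\<ge>1. x0 n \<in> cost_set c \<Gamma> n" using ne by (simp add: x0_def some_in_eq)
  have "tcode W Y c \<Gamma> n 1 (\<lambda>_. x0 n) (\<lambda>_. 1) 0" if "n \<ge> 1" for n
    using tcode_constant[OF x0[rule_format, OF that], of 1 W Y] by simp
  then have "tc_achievable W Y c \<Gamma> 0"
    unfolding tc_achievable_def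
    by (intro exI[of _ "\<lambda>_. 1"] exI[of _ "\<lambda>n _. x0 n"] exI[of _ "\<lambda>_ _. 1"] exI[of _ "\<lambda>_. 0"])
      (simp add: Liminf_const zero_ereal_def)
  then show ?thesis unfolding Cs_def by (auto intro!: Sup_upper simp: zero_ereal_def)
qed

lemma strong_converse_eventually_error_gt:
  assumes sc: "strong_converse W Y c \<Gamma>" and Cs: "Cs W Y c \<Gamma> = ereal C" and R: "C < R"
    and codes: "\<forall>n\<ge>1. tcode W Y c \<Gamma> n (M n) (\<phi> n) (\<psi> n) (\<epsilon> n)"
    and size: "\<forall>n. exp (real n * R) \<le> real (M n)" and \<eta>: "\<eta> > 0"
  shows "\<forall>\<^sub>F n in sequentially. 1 - \<eta> < \<epsilon> n"
proof -
  have "\<forall>\<^sub>F n in sequentially. ereal R \<le> ereal (ln (real (M n)) / real n)"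
    using eventually_ge_at_top[of "1::nat"]
  proof eventually_elim
    case (elim n)
    have "ln (exp (real n * R)) \<le> ln (real (M n))"
      using size by (intro ln_mono) (auto intro: less_le_trans[OF exp_gt_zero])
    then show ?case using elim by (simp add: field_simps)
  qed
  then have "Liminf sequentially (\<lambda>n. ereal (ln (real (M n)) / real n)) \<ge> ereal R"
    by (rule Liminf_bounded)
  then have "Liminf sequentially (\<lambda>n. ereal (ln (real (M n)) / real n)) > Cs W Y c \<Gamma>"
    using Cs R by (auto elim: less_le_trans[rotated])
  then have "\<epsilon> \<longlonglongrightarrow> 1" using sc codes unfolding strong_converse_def by blast
  then show ?thesis using \<eta> by (intro order_tendstoD(1)) auto
qed

text \<open>Under the strong converse, messages with a non-negligible pattern tail at threshold
  \<open>exp (n (C + \<delta>))\<close> would give transmission codes of rate \<open>C + \<delta>/2\<close> whose error stays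
  below \<open>1\<close>.\<close>

lemma eventually_pattern_tails_small:
  fixes W :: "nat \<Rightarrow> ('a::finite) list \<Rightarrow> 'b measure"
  assumes gc: "general_channel W Y" and sc: "strong_converse W Y c \<Gamma>"
    and Cs: "Cs W Y c \<Gamma> = ereal C" and ne: "\<forall>n\<ge>1. cost_set c \<Gamma> n \<noteq> {}"
    and ic: "\<forall>n\<ge>1. idcode W Y c \<Gamma> n (N n) (Q n) (D n) (mus n) (lams n)"
    and \<delta>: "\<delta> > 0" and \<alpha>: "\<alpha> > 0"
  shows "\<forall>\<^sub>F n in sequentially. \<forall>i\<in>{1..N n}.
           pattern_tail W Y n (N n) (D n) (exp (real n * (C + \<delta>))) (Q n i) < \<alpha>"
proof -
  have C: "C \<ge> 0" using Cs_nonneg[OF ne, of W Y] Cs by simp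
  define K where "K = (\<lambda>n::nat. exp (real n * (C + \<delta>)))"
  define M where "M = (\<lambda>n::nat. nat \<lceil>exp (real n * (C + \<delta> / 2))\<rceil>)"
  have M_bounds: "exp (real n * (C + \<delta> / 2)) \<le> real (M n)" "real (M n) \<le> exp (real n * (C + \<delta> / 2)) + 1" for n
    unfolding M_def by (simp_all add: real_nat_ceiling_ge of_int_ceiling_le_add_one)
  have M_ge_1: "M n \<ge> 1" for n using M_bounds(1)[of n] exp_gt_zero[of "real n * (C + \<delta> / 2)"] by linarith
  define bad where "bad = (\<lambda>n. \<exists>i\<in>{1..N n}. \<alpha> \<le> pattern_tail W Y n (N n) (D n) (K n) (Q n i))"
  have "\<exists>\<phi> \<psi> \<epsilon>. n \<ge> 1 \<longrightarrow> tcode W Y c \<Gamma> n (M n) \<phi> \<psi> \<epsilon> \<and> (bad n \<longrightarrow> \<epsilon> \<le> 1 - \<alpha> + real (M n) / K n)"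
    for n
  proof (cases "n \<ge> 1 \<and> bad n")
    case True
    then obtain i where i: "i \<in> {1..N n}" and tail: "\<alpha> \<le> pattern_tail W Y n (N n) (D n) (K n) (Q n i)"
      unfolding bad_def by blast
    have D: "\<forall>i\<in>{1..N n}. D n i \<in> sets (Y n)" and Q: "set_pmf (Q n i) \<subseteq> cost_set c \<Gamma> n"
      using ic True i by (auto simp: idcode_def)
    show ?thesis
      using tcode_of_large_pattern_tail[OF gc D Q _ M_ge_1[of n] tail] by (auto simp: K_def)
  next
    case False
    then show ?thesis using ne tcode_constant[OF _ M_ge_1] by (metis ex_in_conv)
  qed
  then obtain \<phi> \<psi> \<epsilon> where code: "\<And>n. n \<ge> 1 \<Longrightarrow> tcode W Y c \<Gamma> n (M n) (\<phi> n) (\<psi> n) (\<epsilon> n) \<and>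
       (bad n \<longrightarrow> \<epsilon> n \<le> 1 - \<alpha> + real (M n) / K n)"
    by metis
  have "\<forall>\<^sub>F n in sequentially. 1 - \<alpha> / 2 < \<epsilon> n"
    using code \<alpha> M_bounds(1) \<delta>
    by (intro strong_converse_eventually_error_gt[OF sc Cs, of "C + \<delta> / 2"]) auto
  moreover have "\<forall>\<^sub>F n in sequentially. (exp (real n * (C + \<delta> / 2)) + 1) / exp (real n * (C + \<delta>)) < \<alpha> / 2"
    using \<delta> \<alpha> C by real_asymp
  ultimately show ?thesis
    using eventually_ge_at_top[of "1::nat"]
  proof eventually_elim
    case (elim n)
    have "real (M n) / K n \<le> (exp (real n * (C + \<delta> / 2)) + 1) / exp (real n * (C + \<delta>))"
      unfolding K_def by (intro divide_right_mono M_bounds) auto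
    then have "\<not> bad n" using code[of n] elim by fastforce
    then show ?case by (auto simp: bad_def K_def not_le)
  qed
qed

lemma ln_ln_le_of_le_power:
  fixes N A n Ms :: nat
  assumes N: "N \<le> (A ^ n) ^ Ms" and n: "n \<ge> 1"
    and Ms: "real Ms \<le> 2 * exp (real n * E)" and E: "E \<ge> 0" and d: "d \<ge> 0"
    and L: "ln 2 + ln (real n) + ln (ln (real A)) \<le> real n * d"
  shows "ln (ln (real N)) \<le> real n * (E + d)"
proof (cases "N \<le> 2")
  case True
  have "ln (ln (real N)) \<le> 0"
  proof -
    consider "N = 0" | "N = 1" | "N = 2" using True by linarith
    then show ?thesis
    proof cases
      case 3
      then show ?thesis using ln_2_less_1 by simp
    qed auto
  qed
  also have "0 \<le> real n * (E + d)" using E d by simp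
  finally show ?thesis .
next
  case False
  then have N3: "N \<ge> 3" by simp
  have A2: "A \<ge> 2"
  proof (rule ccontr)
    assume "\<not> A \<ge> 2"
    then have "(A ^ n) ^ Ms \<le> 1" by (intro power_le_one) auto
    then show False using N N3 by simp
  qed
  have Ms1: "Ms \<ge> 1"
    using N N3 by (cases Ms) auto
  have "real N \<le> real ((A ^ n) ^ Ms)" using N by (simp only: of_nat_le_iff)
  then have "ln (real N) \<le> ln (real ((A ^ n) ^ Ms))" using N3 by (intro ln_mono) auto
  also have "\<dots> = real Ms * real n * ln (real A)" using A2 by (simp add: ln_realpow)
  finally have "ln (ln (real N)) \<le> ln (real Ms * real n * ln (real A))"
    using N3 by (intro ln_mono) auto
  also have "\<dots> = ln (real Ms) + ln (real n) + ln (ln (real A))"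
    using Ms1 n A2 by (simp add: ln_mult)
  also have "ln (real Ms) \<le> ln 2 + real n * E"
  proof -
    have "ln (real Ms) \<le> ln (2 * exp (real n * E))" using Ms Ms1 by simp
    then show ?thesis by (simp add: ln_mult)
  qed
  finally show ?thesis using L by (simp add: algebra_simps)
qed

lemma ln_ln_card_idcode_le:
  fixes W :: "nat \<Rightarrow> ('a::finite) list \<Rightarrow> 'b measure"
  assumes gc: "general_channel W Y" and ic: "idcode W Y c \<Gamma> n N Q D mu_n lam_n"
    and n: "n \<ge> 1" and C: "C \<ge> 0" and \<delta>: "\<delta> > 0"
    and tails: "\<forall>i\<in>{1..N}. pattern_tail W Y n N D (exp (real n * (C + \<delta>))) (Q i) \<le> \<alpha>"
    and mu: "mu_n \<le> ereal a" and lam: "lam_n \<le> ereal b"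
    and small: "2 * (2 * \<alpha> + sqrt (exp (real n * (C + \<delta>)) / exp (real n * (C + 2 * \<delta>)))) < 1 - a - b"
    and L: "ln 2 + ln (real n) + ln (ln (real CARD('a))) \<le> real n * \<delta>"
  shows "ln (ln (real N)) \<le> real n * (C + 3 * \<delta>)"
proof -
  define Ms where "Ms = nat \<lceil>exp (real n * (C + 2 * \<delta>))\<rceil>"
  have Ms_bounds: "exp (real n * (C + 2 * \<delta>)) \<le> real Ms" "real Ms \<le> exp (real n * (C + 2 * \<delta>)) + 1"
    unfolding Ms_def by (simp_all add: real_nat_ceiling_ge of_int_ceiling_le_add_one)
  have Ms_pos: "Ms > 0" using Ms_bounds(1) exp_gt_zero[of "real n * (C + 2 * \<delta>)"] by linarith
  have "sqrt (exp (real n * (C + \<delta>)) / real Ms)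
      \<le> sqrt (exp (real n * (C + \<delta>)) / exp (real n * (C + 2 * \<delta>)))"
    using Ms_pos by (intro real_sqrt_le_mono divide_left_mono Ms_bounds) auto
  then have "2 * (2 * \<alpha> + sqrt (exp (real n * (C + \<delta>)) / real Ms)) < 1 - a - b"
    using small by argo
  then have "N \<le> (CARD('a) ^ n) ^ Ms"
    using idcode_card_le_of_small_pattern_tails[OF gc ic _ Ms_pos tails mu lam] by simp
  moreover have "real Ms \<le> 2 * exp (real n * (C + 2 * \<delta>))"
  proof -
    have "1 \<le> exp (real n * (C + 2 * \<delta>))" using C \<delta> by simp
    then show ?thesis using Ms_bounds(2) by linarith
  qed
  ultimately have "ln (ln (real N)) \<le> real n * ((C + 2 * \<delta>) + \<delta>)"
    using n C \<delta> L by (intro ln_ln_le_of_le_power) auto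
  then show ?thesis by (simp add: algebra_simps)
qed

lemma idcode_rate_le_Cs_plus:
  fixes W :: "nat \<Rightarrow> ('a::finite) list \<Rightarrow> 'b measure"
  assumes gc: "general_channel W Y" and sc: "strong_converse W Y c \<Gamma>"
    and Cs: "Cs W Y c \<Gamma> = ereal C" and ne: "\<forall>n\<ge>1. cost_set c \<Gamma> n \<noteq> {}"
    and ml: "mu + lam < 1"
    and ic: "\<forall>n\<ge>1. idcode W Y c \<Gamma> n (N n) (Q n) (D n) (mus n) (lams n)"
    and lsm: "limsup mus \<le> ereal mu" and lsl: "limsup lams \<le> ereal lam"
    and \<delta>: "\<delta> > 0"
  shows "Liminf sequentially (\<lambda>n. ereal (ln (ln (real (N n))) / real n)) \<le> ereal (C + 3 * \<delta>)"
proof -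
  have C: "C \<ge> 0" using Cs_nonneg[OF ne, of W Y] Cs by simp
  define \<theta> where "\<theta> = 1 - mu - lam"
  have \<theta>: "\<theta> > 0" using ml by (simp add: \<theta>_def)
  have "\<forall>\<^sub>F n in sequentially. \<forall>i\<in>{1..N n}.
      pattern_tail W Y n (N n) (D n) (exp (real n * (C + \<delta>))) (Q n i) < \<theta> / 16"
    using \<theta> by (intro eventually_pattern_tails_small[OF gc sc Cs ne ic \<delta>]) auto
  moreover have "\<forall>\<^sub>F n in sequentially.
      sqrt (exp (real n * (C + \<delta>)) / exp (real n * (C + 2 * \<delta>))) < \<theta> / 8"
    using \<delta> \<theta> C by real_asymp
  moreover have "\<forall>\<^sub>F n in sequentially. mus n < ereal (mu + \<theta> / 4)"
    using lsm \<theta> by (intro Limsup_lessD) (auto elim: le_less_trans)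
  moreover have "\<forall>\<^sub>F n in sequentially. lams n < ereal (lam + \<theta> / 4)"
    using lsl \<theta> by (intro Limsup_lessD) (auto elim: le_less_trans)
  moreover have "\<forall>\<^sub>F n in sequentially. ln 2 + ln (real n) + ln (ln (real CARD('a))) \<le> real n * \<delta>"
    using \<delta> by real_asymp
  ultimately have "\<forall>\<^sub>F n in sequentially. ereal (ln (ln (real (N n))) / real n) \<le> ereal (C + 3 * \<delta>)"
    using eventually_ge_at_top[of "1::nat"]
  proof eventually_elim
    case (elim n)
    have "ln (ln (real (N n))) \<le> real n * (C + 3 * \<delta>)"
    proof (rule ln_ln_card_idcode_le[OF gc _ elim(6) C \<delta>])
      show "idcode W Y c \<Gamma> n (N n) (Q n) (D n) (mus n) (lams n)" using ic elim(6) by simp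
      show "2 * (2 * (\<theta> / 16) + sqrt (exp (real n * (C + \<delta>)) / exp (real n * (C + 2 * \<delta>))))
          < 1 - (mu + \<theta> / 4) - (lam + \<theta> / 4)"
        using elim(2) \<theta>_def by argo
    qed (use elim in \<open>auto simp: less_imp_le\<close>)
    then show ?case using elim by (simp add: field_simps)
  qed
  then have "Liminf sequentially (\<lambda>n. ereal (ln (ln (real (N n))) / real n))
      \<le> Liminf sequentially (\<lambda>n. ereal (C + 3 * \<delta>))"
    by (rule Liminf_mono)
  then show ?thesis by (simp add: Liminf_const)
qed

lemma IDcap_le_Cs:
  fixes W :: "nat \<Rightarrow> ('a::finite) list \<Rightarrow> 'b measure"
  assumes gc: "general_channel W Y" and sc: "strong_converse W Y c \<Gamma>"
    and ne: "\<forall>n\<ge>1. cost_set c \<Gamma> n \<noteq> {}" and ml: "mu + lam < 1"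
  shows "IDcap W Y c \<Gamma> mu lam \<le> Cs W Y c \<Gamma>"
  unfolding IDcap_def
proof (rule Sup_least, clarify)
  fix R assume "id_achievable W Y c \<Gamma> mu lam R"
  then obtain N Q D mus lams where ic: "\<forall>n\<ge>1. idcode W Y c \<Gamma> n (N n) (Q n) (D n) (mus n) (lams n)"
    and lsm: "limsup mus \<le> ereal mu" and lsl: "limsup lams \<le> ereal lam"
    and rate: "Liminf sequentially (\<lambda>n. ereal (ln (ln (real (N n))) / real n)) \<ge> ereal R"
    unfolding id_achievable_def by blast
  show "ereal R \<le> Cs W Y c \<Gamma>"
  proof (cases "Cs W Y c \<Gamma>")
    case (real C)
    have "R \<le> C + \<epsilon>" if "\<epsilon> > 0" for \<epsilon>
      using order_trans[OF rate idcode_rate_le_Cs_plus[OF gc sc real ne ml ic lsm lsl, of "\<epsilon> / 3"]] that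
      by simp
    then show ?thesis using real by (simp add: field_le_epsilon)
  qed (use Cs_nonneg[OF ne, of W Y] in auto)
qed

section \<open>Achievability: identification codes from transmission codes\<close>

lemma card_small_errors_ge:
  fixes err :: "nat \<Rightarrow> real"
  assumes nonneg: "\<And>i. err i \<ge> 0" and M: "M \<ge> 1"
  defines "\<epsilon> \<equiv> (\<Sum>i=1..M. err i) / real M"
  shows "real M \<le> 2 * real (card {i\<in>{1..M}. err i \<le> 2 * \<epsilon>})"
proof -
  let ?G = "{i\<in>{1..M}. err i \<le> 2 * \<epsilon>}" and ?B = "{i\<in>{1..M}. \<not> err i \<le> 2 * \<epsilon>}"
  have "card (?G \<union> ?B) = card ?G + card ?B" by (rule card_Un_disjoint) auto
  moreover have "?G \<union> ?B = {1..M}" by auto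
  ultimately have card_GB: "card ?G + card ?B = M" by simp
  have "2 * real (card ?B) \<le> real M"
  proof (cases "?B = {}")
    case False
    have "(\<Sum>i\<in>?B. 2 * \<epsilon>) < (\<Sum>i\<in>?B. err i)"
      using False by (intro sum_strict_mono) auto
    also have "\<dots> \<le> (\<Sum>i=1..M. err i)" using nonneg by (intro sum_mono2) auto
    finally have lt: "2 * \<epsilon> * real (card ?B) < real M * \<epsilon>"
      using M by (simp add: \<epsilon>_def mult.commute)
    moreover have "\<epsilon> \<ge> 0" using nonneg by (simp add: \<epsilon>_def sum_nonneg)
    ultimately show ?thesis by (cases "\<epsilon> = 0") (auto simp: mult.commute)
  next
    case True
    then show ?thesis by (simp only: card.empty)
  qed
  then show ?thesis using card_GB by linarith
qed

lemma tcode_expurgated: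
  assumes tc: "tcode W Y c \<Gamma> n M \<phi> \<psi> \<epsilon>" and I: "finite I" "2 * card I \<le> M"
  shows "\<exists>e. inj_on e I \<and> (\<forall>i\<in>I. e i \<in> {1..M} \<and>
           measure (W n (\<phi> (e i))) (space (Y n) - \<psi> -` {e i}) \<le> 2 * \<epsilon>)"
proof -
  define err where "err i = measure (W n (\<phi> i)) (space (Y n) - \<psi> -` {i})" for i
  define G where "G = {i\<in>{1..M}. err i \<le> 2 * \<epsilon>}"
  have M: "M \<ge> 1" and \<epsilon>: "\<epsilon> = (\<Sum>i=1..M. err i) / real M"
    using tc by (auto simp: tcode_def err_def)
  have "real M \<le> 2 * real (card G)"
    unfolding G_def \<epsilon> by (rule card_small_errors_ge[OF _ M]) (simp add: err_def)
  then have "card I \<le> card G" using I(2) by linarith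
  then obtain e where "e ` I \<subseteq> G" "inj_on e I"
    using card_le_inj[OF I(1), of G] by (auto simp: G_def)
  then show ?thesis by (intro exI[of _ e]) (auto simp: G_def err_def)
qed

lemma measure_channel_mono:
  assumes "general_channel W Y" "length x = n" "A \<subseteq> B" "B \<in> sets (Y n)"
  shows "measure (W n x) A \<le> measure (W n x) B"
proof -
  interpret prob_space "W n x" using assms(1,2) by (rule general_channel_prob_space)
  have "sets (W n x) = sets (Y n)" using assms(1,2) by (rule general_channel_sets)
  then show ?thesis using assms(3,4) by (intro finite_measure_mono) auto
qed

lemma outprob_uniform_mixture_le:
  assumes "K \<ge> 1" "\<And>k. k < K \<Longrightarrow> measure (W n (g k)) B \<le> b k"
  shows "outprob W n (map_pmf g (pmf_of_set {..<K})) B \<le> (\<Sum>k<K. b k) / real K"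
proof -
  have "0 \<in> {..<K}" using assms(1) by simp
  then have "{..<K} \<noteq> {}" by blast
  then have "outprob W n (map_pmf g (pmf_of_set {..<K})) B = (\<Sum>k<K. measure (W n (g k)) B) / real K"
    unfolding outprob_def by (simp add: integral_pmf_of_set)
  also have "\<dots> \<le> (\<Sum>k<K. b k) / real K"
    using assms by (intro divide_right_mono sum_mono) auto
  finally show ?thesis .
qed

text \<open>Concatenation of a family of words of length \<open>K\<close> over \<open>{..<q}\<close> with a transmission code
  indexed by (position, letter): the word \<open>f\<close> sends the codeword of \<open>(k, f k)\<close> for a uniformly
  random position \<open>k\<close>, and accepts if the decoded pair is \<open>(k', f k')\<close> for some \<open>k'\<close>.\<close>

lemma outprob_word_decoding_set_miss_le:
  fixes W :: "nat \<Rightarrow> ('a::finite) list \<Rightarrow> 'b measure" and u :: "nat \<times> nat \<Rightarrow> 'a list"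
  assumes gc: "general_channel W Y" and K: "K \<ge> 1"
    and u: "\<forall>p\<in>{..<K} \<times> {..<q}. u p \<in> cost_set c \<Gamma> n \<and> E p \<in> sets (Y n) \<and>
              measure (W n (u p)) (space (Y n) - E p) \<le> e"
    and f: "f \<in> PiE {..<K} (\<lambda>_. {..<q})"
  shows "outprob W n (map_pmf (\<lambda>k. u (k, f k)) (pmf_of_set {..<K})) (space (Y n) - (\<Union>k<K. E (k, f k))) \<le> e"
proof -
  have "outprob W n (map_pmf (\<lambda>k. u (k, f k)) (pmf_of_set {..<K})) (space (Y n) - (\<Union>k<K. E (k, f k)))
      \<le> (\<Sum>k<K. e) / real K"
  proof (rule outprob_uniform_mixture_le[OF K])
    fix k assume k: "k < K"
    then have uk: "u (k, f k) \<in> cost_set c \<Gamma> n" "E (k, f k) \<in> sets (Y n)"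
      "measure (W n (u (k, f k))) (space (Y n) - E (k, f k)) \<le> e"
      using u f by auto
    have "measure (W n (u (k, f k))) (space (Y n) - (\<Union>k<K. E (k, f k)))
        \<le> measure (W n (u (k, f k))) (space (Y n) - E (k, f k))"
      using uk k by (intro measure_channel_mono[OF gc length_cost_set]) auto
    then show "measure (W n (u (k, f k))) (space (Y n) - (\<Union>k<K. E (k, f k))) \<le> e"
      using uk(3) by linarith
  qed
  then show ?thesis using K by simp
qed

lemma outprob_other_word_decoding_set_le:
  fixes W :: "nat \<Rightarrow> ('a::finite) list \<Rightarrow> 'b measure" and u :: "nat \<times> nat \<Rightarrow> 'a list"
  assumes gc: "general_channel W Y" and K: "K \<ge> 1" and e: "e \<ge> 0"
    and u: "\<forall>p\<in>{..<K} \<times> {..<q}. u p \<in> cost_set c \<Gamma> n \<and> E p \<in> sets (Y n) \<and>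
              measure (W n (u p)) (space (Y n) - E p) \<le> e"
    and disj: "disjoint_family_on E ({..<K} \<times> {..<q})"
    and f: "f \<in> PiE {..<K} (\<lambda>_. {..<q})" and g: "g \<in> PiE {..<K} (\<lambda>_. {..<q})"
  shows "outprob W n (map_pmf (\<lambda>k. u (k, g k)) (pmf_of_set {..<K})) (\<Union>k<K. E (k, f k))
           \<le> real (agreement K f g) / real K + e"
proof -
  have "outprob W n (map_pmf (\<lambda>k. u (k, g k)) (pmf_of_set {..<K})) (\<Union>k<K. E (k, f k))
      \<le> (\<Sum>k<K. of_bool (f k = g k) + e) / real K"
  proof (rule outprob_uniform_mixture_le[OF K])
    fix k assume k: "k < K"
    then have uk: "length (u (k, g k)) = n" "E (k, g k) \<in> sets (Y n)"
      "measure (W n (u (k, g k))) (space (Y n) - E (k, g k)) \<le> e"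
      using u g by (auto dest: length_cost_set)
    show "measure (W n (u (k, g k))) (\<Union>k<K. E (k, f k)) \<le> of_bool (f k = g k) + e"
    proof (cases "f k = g k")
      case True
      interpret prob_space "W n (u (k, g k))" using gc uk(1) by (rule general_channel_prob_space)
      show ?thesis using True e by (intro order_trans[OF prob_le_1]) simp
    next
      case False
      have "(\<Union>k<K. E (k, f k)) \<subseteq> space (Y n) - E (k, g k)"
      proof
        fix y assume "y \<in> (\<Union>k<K. E (k, f k))"
        then obtain k' where k': "k' < K" "y \<in> E (k', f k')" by blast
        have mem: "(k', f k') \<in> {..<K} \<times> {..<q}" "(k, g k) \<in> {..<K} \<times> {..<q}"
          using f g k k'(1) by auto
        have "(k', f k') \<noteq> (k, g k)" using False by auto
        then have "y \<notin> E (k, g k)"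
          using disj mem k'(2) unfolding disjoint_family_on_def by blast
        moreover have "y \<in> space (Y n)" using k'(2) u mem(1) sets.sets_into_space by blast
        ultimately show "y \<in> space (Y n) - E (k, g k)" by simp
      qed
      then have "measure (W n (u (k, g k))) (\<Union>k<K. E (k, f k))
          \<le> measure (W n (u (k, g k))) (space (Y n) - E (k, g k))"
        using uk by (intro measure_channel_mono[OF gc]) auto
      then show ?thesis using False uk(3) by simp
    qed
  qed
  also have "\<dots> = real (agreement K f g) / real K + e"
    using K by (simp add: sum.distrib agreement_def Int_def add_divide_distrib)
  finally show ?thesis .
qed

lemma idcode_of_agreement_family:
  fixes W :: "nat \<Rightarrow> ('a::finite) list \<Rightarrow> 'b measure" and u :: "nat \<times> nat \<Rightarrow> 'a list"
  assumes gc: "general_channel W Y" and K: "K \<ge> 1" and e: "e \<ge> 0"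
    and u: "\<forall>p\<in>{..<K} \<times> {..<q}. u p \<in> cost_set c \<Gamma> n \<and> E p \<in> sets (Y n) \<and>
              measure (W n (u p)) (space (Y n) - E p) \<le> e"
    and disj: "disjoint_family_on E ({..<K} \<times> {..<q})"
    and F: "F \<subseteq> PiE {..<K} (\<lambda>_. {..<q})" "F \<noteq> {}"
    and agree: "\<forall>f\<in>F. \<forall>g\<in>F. f \<noteq> g \<longrightarrow> agreement K f g < t"
  shows "\<exists>Q D mu_n lam_n. idcode W Y c \<Gamma> n (card F) Q D mu_n lam_n \<and>
           mu_n \<le> ereal e \<and> lam_n \<le> ereal (real t / real K + e)"
proof -
  have "finite F" using F(1) by (rule finite_subset) (auto intro: finite_PiE)
  then obtain fe where fe: "bij_betw fe {1..card F} F" using ex_bij_betw_nat_finite_1 by blast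
  have fe_mem: "fe i \<in> PiE {..<K} (\<lambda>_. {..<q})" if "i \<in> {1..card F}" for i
    using bij_betwE[OF fe] F(1) that by blast
  define Q where "Q i = map_pmf (\<lambda>k. u (k, fe i k)) (pmf_of_set {..<K})" for i
  define D where "D i = (\<Union>k<K. E (k, fe i k))" for i
  have "0 \<in> {..<K}" using K by simp
  then have "set_pmf (pmf_of_set {..<K}) = {..<K}" by (intro set_pmf_of_set) auto
  then have set_Q: "set_pmf (Q i) \<subseteq> cost_set c \<Gamma> n" if "i \<in> {1..card F}" for i
    unfolding Q_def using u fe_mem[OF that] by auto
  have D: "D i \<in> sets (Y n)" if "i \<in> {1..card F}" for i
    unfolding D_def using u fe_mem[OF that] by (intro sets.finite_UN) auto
  have false: "outprob W n (Q j) (D i) \<le> real t / real K + e"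
    if i: "i \<in> {1..card F}" and j: "j \<in> {1..card F}" and "i \<noteq> j" for i j
  proof -
    have "fe i \<noteq> fe j" using inj_onD[OF bij_betw_imp_inj_on[OF fe] _ i j] \<open>i \<noteq> j\<close> by blast
    then have "agreement K (fe i) (fe j) < t" using agree bij_betwE[OF fe] i j by blast
    moreover have "outprob W n (Q j) (D i) \<le> real (agreement K (fe i) (fe j)) / real K + e"
      unfolding Q_def D_def
      by (rule outprob_other_word_decoding_set_le[OF gc K e u disj fe_mem[OF i] fe_mem[OF j]])
    ultimately show ?thesis using K by (simp add: divide_right_mono order_trans)
  qed
  define mu_n where "mu_n = (SUP i\<in>{1..card F}. ereal (outprob W n (Q i) (space (Y n) - D i)))"
  define lam_n where "lam_n = (SUP ij\<in>{(i, j). i \<in> {1..card F} \<and> j \<in> {1..card F} \<and> i \<noteq> j}.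
              ereal (outprob W n (Q (snd ij)) (D (fst ij))))"
  have "idcode W Y c \<Gamma> n (card F) Q D mu_n lam_n"
    unfolding idcode_def mu_n_def lam_n_def using F \<open>finite F\<close> set_Q D by (auto simp: Suc_le_eq card_gt_0_iff)
  moreover have "mu_n \<le> ereal e"
    unfolding mu_n_def Q_def D_def
    using outprob_word_decoding_set_miss_le[OF gc K u fe_mem] by (auto intro: SUP_least)
  moreover have "lam_n \<le> ereal (real t / real K + e)" unfolding lam_n_def using false by (auto intro!: SUP_least)
  ultimately show ?thesis by blast
qed

lemma idcode_from_tcode:
  fixes W :: "nat \<Rightarrow> ('a::finite) list \<Rightarrow> 'b measure"
  assumes gc: "general_channel W Y" and tc: "tcode W Y c \<Gamma> n M \<phi> \<psi> \<epsilon>"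
    and K: "K \<ge> 1" and q: "q \<ge> 1" and KqM: "2 * (K * q) \<le> M" and t: "t \<le> K"
  shows "\<exists>N Q D mu_n lam_n. idcode W Y c \<Gamma> n N Q D mu_n lam_n \<and> mu_n \<le> ereal (2 * \<epsilon>) \<and>
     lam_n \<le> ereal (real t / real K + 2 * \<epsilon>) \<and> q ^ K \<le> N * (2 ^ K * q ^ (K - t))"
proof -
  obtain F where F: "F \<subseteq> PiE {..<K} (\<lambda>_. {..<q})" "\<forall>f\<in>F. \<forall>g\<in>F. f \<noteq> g \<longrightarrow> agreement K f g < t"
      and card_F: "q ^ K \<le> card F * (2 ^ K * q ^ (K - t))"
    using gilbert_varshamov_family[OF t, of q] by blast
  have "F \<noteq> {}" using card_F q by (intro notI) simp
  obtain e where e: "inj_on e ({..<K} \<times> {..<q})" and e_mem: "\<forall>p\<in>{..<K} \<times> {..<q}. e p \<in> {1..M}"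
      and e_err: "\<forall>p\<in>{..<K} \<times> {..<q}. measure (W n (\<phi> (e p))) (space (Y n) - \<psi> -` {e p}) \<le> 2 * \<epsilon>"
    using tcode_expurgated[OF tc, of "{..<K} \<times> {..<q}"] KqM by (auto simp: card_cartesian_product)
  have \<phi>: "\<forall>i\<in>{1..M}. \<phi> i \<in> cost_set c \<Gamma> n" and \<psi>: "\<psi> \<in> measurable (Y n) (count_space {1..M})"
    and \<epsilon>: "\<epsilon> = (\<Sum>i=1..M. measure (W n (\<phi> i)) (space (Y n) - \<psi> -` {i})) / real M"
    using tc by (auto simp: tcode_def)
  have "\<epsilon> \<ge> 0" unfolding \<epsilon> by (simp add: sum_nonneg)
  define E where "E p = \<psi> -` {e p} \<inter> space (Y n)" for p
  have u: "\<forall>p\<in>{..<K} \<times> {..<q}. \<phi> (e p) \<in> cost_set c \<Gamma> n \<and> E p \<in> sets (Y n) \<and>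
      measure (W n (\<phi> (e p))) (space (Y n) - E p) \<le> 2 * \<epsilon>"
  proof
    fix p assume p: "p \<in> {..<K} \<times> {..<q}"
    have "E p \<in> sets (Y n)" unfolding E_def using \<psi> e_mem p by (intro measurable_sets) auto
    moreover have "space (Y n) - E p = space (Y n) - \<psi> -` {e p}" by (auto simp: E_def)
    ultimately show "\<phi> (e p) \<in> cost_set c \<Gamma> n \<and> E p \<in> sets (Y n) \<and>
        measure (W n (\<phi> (e p))) (space (Y n) - E p) \<le> 2 * \<epsilon>"
      using \<phi> e_mem e_err p by auto
  qed
  have disj: "disjoint_family_on E ({..<K} \<times> {..<q})"
  proof (unfold disjoint_family_on_def, intro ballI impI)
    fix p p' assume "p \<in> {..<K} \<times> {..<q}" "p' \<in> {..<K} \<times> {..<q}" "p \<noteq> p'"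
    then have "e p \<noteq> e p'" using inj_onD[OF e] by blast
    then show "E p \<inter> E p' = {}" by (auto simp: E_def)
  qed
  have "\<exists>Q D mu_n lam_n. idcode W Y c \<Gamma> n (card F) Q D mu_n lam_n \<and>
      mu_n \<le> ereal (2 * \<epsilon>) \<and> lam_n \<le> ereal (real t / real K + 2 * \<epsilon>)"
    using \<open>\<epsilon> \<ge> 0\<close> by (intro idcode_of_agreement_family[OF gc K _ u disj F(1) \<open>F \<noteq> {}\<close> F(2)]) simp
  then show ?thesis using card_F by (intro exI[of _ "card F"]) blast
qed

lemma ln_ln_ge_of_gilbert_varshamov_bound:
  fixes N K q t :: nat
  assumes q: "q \<ge> 2" and K: "K \<ge> 1" and t: "t \<le> K"
    and tq: "real K * ln 4 \<le> real t * ln (real q)"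
    and N: "q ^ K \<le> N * (2 ^ K * q ^ (K - t))"
  shows "ln (real K) + ln (ln 2) \<le> ln (ln (real N))"
proof -
  have N_pos: "N > 0" using N q by (intro gr0I) simp
  have "real (q ^ K) \<le> real (N * (2 ^ K * q ^ (K - t)))" using N by (simp only: of_nat_le_iff)
  then have "real q ^ K \<le> real N * (2 ^ K * real q ^ (K - t))" by simp
  then have "ln (real q ^ K) \<le> ln (real N * (2 ^ K * real q ^ (K - t)))"
    using q by (intro ln_mono) auto
  then have "real K * ln (real q) \<le> ln (real N) + real K * ln 2 + (real K - real t) * ln (real q)"
    using N_pos q t by (simp add: ln_mult ln_realpow of_nat_diff)
  moreover have "ln (4::real) = 2 * ln 2"
    using ln_realpow[of 2 2] by simp
  ultimately have "real K * ln 2 \<le> ln (real N)" using tq by (simp add: algebra_simps)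
  then have "ln (real K * ln 2) \<le> ln (ln (real N))" using K by (intro ln_mono) auto
  then show ?thesis using K by (simp add: ln_mult)
qed

lemma real_div_nat_ge:
  fixes a b :: nat
  assumes "b > 0"
  shows "real a / real b - 1 \<le> real (a div b)"
proof -
  have "real a = real b * real (a div b) + real (a mod b)"
    by (metis div_mult_mod_eq of_nat_add of_nat_mult mult.commute)
  moreover have "real (a mod b) < real b" using assms by simp
  ultimately have "real a / real b < real (a div b) + 1"
    using assms by (simp add: divide_less_eq algebra_simps)
  then show ?thesis by simp
qed

text \<open>Using words of length \<open>K = M div (2 q)\<close> over \<open>q\<close> letters with agreement threshold
  \<open>t \<approx> K ln 4 / ln q\<close>, the false identification error is about \<open>ln 4 / ln q\<close> while the number
  of messages is doubly exponential in \<open>K\<close>.\<close>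

lemma idcode_from_tcode_double_exponential:
  fixes W :: "nat \<Rightarrow> ('a::finite) list \<Rightarrow> 'b measure"
  assumes gc: "general_channel W Y" and tc: "tcode W Y c \<Gamma> n M \<phi> \<psi> \<epsilon>"
    and q: "q \<ge> 4" and L: "1 \<le> L" "L \<le> real M / real (2 * q) - 1"
  shows "\<exists>N Q D mu_n lam_n. idcode W Y c \<Gamma> n N Q D mu_n lam_n \<and> mu_n \<le> ereal (2 * \<epsilon>) \<and>
     lam_n \<le> ereal (ln 4 / ln (real q) + 1 / L + 2 * \<epsilon>) \<and> ln L + ln (ln 2) \<le> ln (ln (real N))"
proof -
  define K where "K = M div (2 * q)"
  define t where "t = nat \<lceil>real K * ln 4 / ln (real q)\<rceil>"
  have L_K: "L \<le> real K" unfolding K_def using L(2) real_div_nat_ge[of "2 * q" M] q by linarith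
  then have K1: "K \<ge> 1" using L(1) by linarith
  have q1: "q \<ge> 1" using q by simp
  have ln_q: "ln 4 \<le> ln (real q)" "ln (real q) > 0" using q by auto
  have t_lb: "real K * ln 4 / ln (real q) \<le> real t" unfolding t_def by (rule real_nat_ceiling_ge)
  have t_ub: "real t \<le> real K * ln 4 / ln (real q) + 1"
    unfolding t_def using ln_q by (simp add: of_int_ceiling_le_add_one)
  have "real K * ln 4 / ln (real q) \<le> real K"
    using ln_q by (simp add: divide_le_eq mult_left_mono)
  then have t_K: "t \<le> K" unfolding t_def by (simp add: nat_le_iff ceiling_le_iff)
  have KqM: "2 * (K * q) \<le> M" unfolding K_def by (metis div_times_less_eq_dividend mult.assoc mult.commute)
  obtain N Q D mu_n lam_n where ic: "idcode W Y c \<Gamma> n N Q D mu_n lam_n"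
      and mu: "mu_n \<le> ereal (2 * \<epsilon>)" and lam: "lam_n \<le> ereal (real t / real K + 2 * \<epsilon>)"
      and N: "q ^ K \<le> N * (2 ^ K * q ^ (K - t))"
    using idcode_from_tcode[OF gc tc K1 q1 KqM t_K] by blast
  have "real t / real K \<le> (real K * ln 4 / ln (real q) + 1) / real K"
    using t_ub by (intro divide_right_mono) auto
  also have "\<dots> = ln 4 / ln (real q) + 1 / real K" using K1 by (simp add: field_simps)
  also have "1 / real K \<le> 1 / L" using L(1) L_K by (intro divide_left_mono) auto
  finally have "lam_n \<le> ereal (ln 4 / ln (real q) + 1 / L + 2 * \<epsilon>)"
    using lam by (simp add: order_trans)
  moreover have "ln (real K) + ln (ln 2) \<le> ln (ln (real N))"
    using t_lb ln_q q K1 t_K N by (intro ln_ln_ge_of_gilbert_varshamov_bound) (auto simp: field_simps)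
  moreover have "ln L \<le> ln (real K)" using L(1) L_K by simp
  ultimately show ?thesis using ic mu by fastforce
qed

lemma limsup_le_of_eventually_le_tendsto_0:
  fixes f :: "nat \<Rightarrow> ereal"
  assumes "\<forall>\<^sub>F n in sequentially. f n \<le> ereal (g n)" "g \<longlonglongrightarrow> 0" "x \<ge> 0"
  shows "limsup f \<le> ereal x"
proof -
  have "limsup f \<le> limsup (\<lambda>n. ereal (g n))" using assms(1) by (rule Limsup_mono)
  also have "\<dots> = 0" using assms(2) by (intro lim_imp_Limsup) (auto simp: zero_ereal_def)
  finally show ?thesis using assms(3) by (simp add: zero_ereal_def order_trans)
qed

lemma eventually_exp_le_of_Liminf_rate:
  fixes M :: "nat \<Rightarrow> nat"
  assumes rate: "Liminf sequentially (\<lambda>n. ereal (ln (real (M n)) / real n)) \<ge> ereal R"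
    and M: "\<forall>n\<ge>1. M n \<ge> 1" and \<rho>: "\<rho> < R"
  shows "\<forall>\<^sub>F n in sequentially. exp (real n * \<rho>) \<le> real (M n)"
proof -
  have "ereal \<rho> < ereal R" using \<rho> by simp
  then have "\<forall>\<^sub>F n in sequentially. ereal \<rho> < ereal (ln (real (M n)) / real n)"
    using rate unfolding le_Liminf_iff by blast
  then show ?thesis using eventually_ge_at_top[of "1::nat"]
  proof eventually_elim
    case (elim n)
    have "real (M n) > 0" using M elim(2) by force
    have "real n * \<rho> < ln (real (M n))" using elim by (simp add: field_simps)
    then have "exp (real n * \<rho>) < exp (ln (real (M n)))" by (rule exp_less_mono)
    also have "\<dots> = real (M n)" using \<open>real (M n) > 0\<close> by simp
    finally show ?case by simp
  qed
qed

lemma idcode_trivial: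
  assumes "x0 \<in> cost_set c \<Gamma> n"
  shows "idcode W Y c \<Gamma> n 1 (\<lambda>_. return_pmf x0) (\<lambda>_. space (Y n)) (ereal 0) (-\<infinity>)"
proof -
  have no_pairs: "{(i, j). i \<in> {1..1::nat} \<and> j \<in> {1..1} \<and> i \<noteq> j} = {}" by auto
  show ?thesis unfolding idcode_def no_pairs using assms by (simp add: outprob_def bot_ereal_def)
qed

lemma id_achievable_of_tc_achievable:
  fixes W :: "nat \<Rightarrow> ('a::finite) list \<Rightarrow> 'b measure"
  assumes gc: "general_channel W Y" and tc: "tc_achievable W Y c \<Gamma> R"
    and r: "0 < r" "r < R" and mu: "mu \<ge> 0" and lam: "lam \<ge> 0"
  shows "id_achievable W Y c \<Gamma> mu lam r"
proof -
  obtain M \<phi> \<psi> \<epsilon> where tcs: "\<forall>n\<ge>1. tcode W Y c \<Gamma> n (M n) (\<phi> n) (\<psi> n) (\<epsilon> n)"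
    and \<epsilon>: "\<epsilon> \<longlonglongrightarrow> 0" and rate: "Liminf sequentially (\<lambda>n. ereal (ln (real (M n)) / real n)) \<ge> ereal R"
    using tc unfolding tc_achievable_def by blast
  define \<rho> where "\<rho> = (r + R) / 2"
  define X where "X n = exp (real n * \<rho>) / (2 * (real n + 4)) - 1" for n :: nat
  define good where "good n \<longleftrightarrow> n \<ge> 1 \<and> exp (real n * \<rho>) \<le> real (M n) \<and> 1 \<le> X n" for n
  define props where "props n N mus lams \<longleftrightarrow> mus \<le> ereal (2 * \<epsilon> n) \<and>
      lams \<le> ereal (ln 4 / ln (real n + 4) + 1 / X n + 2 * \<epsilon> n) \<and> ln (X n) + ln (ln 2) \<le> ln (ln (real N))"
    for n N and mus lams :: ereal
  have "\<exists>N Q D mus lams. idcode W Y c \<Gamma> n N Q D mus lams \<and> (good n \<longrightarrow> props n N mus lams)"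
    if n: "n \<ge> 1" for n
  proof (cases "good n")
    case True
    have "X n \<le> real (M n) / real (2 * (n + 4)) - 1"
      using True by (auto simp: good_def X_def intro: divide_right_mono)
    then show ?thesis
      using idcode_from_tcode_double_exponential[OF gc tcs[rule_format, OF n], of "n + 4" "X n"] True
      unfolding props_def by (simp add: good_def add.commute)
  next
    case False
    have "\<phi> n 1 \<in> cost_set c \<Gamma> n" using tcs n by (auto simp: tcode_def)
    then show ?thesis using False idcode_trivial by blast
  qed
  then obtain N Q D mus lams where code: "\<And>n. n \<ge> 1 \<Longrightarrow>
      idcode W Y c \<Gamma> n (N n) (Q n) (D n) (mus n) (lams n) \<and> (good n \<longrightarrow> props n (N n) (mus n) (lams n))"
    by metis
  have "\<forall>\<^sub>F n in sequentially. exp (real n * \<rho>) \<le> real (M n)"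
    using tcs r by (intro eventually_exp_le_of_Liminf_rate[OF rate]) (auto simp: \<rho>_def tcode_def)
  moreover have "\<forall>\<^sub>F n in sequentially. 1 \<le> X n" unfolding X_def \<rho>_def using r by real_asymp
  ultimately have "\<forall>\<^sub>F n in sequentially. good n \<and> props n (N n) (mus n) (lams n)"
    using eventually_ge_at_top[of "1::nat"] by eventually_elim (use code in \<open>auto simp: good_def\<close>)
  then have ev: "\<forall>\<^sub>F n in sequentially. props n (N n) (mus n) (lams n)"
    by (rule eventually_mono) simp
  have "\<forall>\<^sub>F n in sequentially. real n * r \<le> ln (X n) + ln (ln 2)"
    unfolding X_def \<rho>_def using r by real_asymp
  with ev have "\<forall>\<^sub>F n in sequentially. ereal r \<le> ereal (ln (ln (real (N n))) / real n)"
    using eventually_ge_at_top[of "1::nat"] by eventually_elim (auto simp: props_def field_simps)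
  then have "Liminf sequentially (\<lambda>n. ereal (ln (ln (real (N n))) / real n)) \<ge> ereal r"
    by (rule Liminf_bounded)
  moreover have "limsup mus \<le> ereal mu"
    using ev \<epsilon> mu by (intro limsup_le_of_eventually_le_tendsto_0[where g="\<lambda>n. 2 * \<epsilon> n"])
      (auto simp: props_def elim: eventually_mono intro: tendsto_eq_intros)
  moreover have "limsup lams \<le> ereal lam"
  proof (rule limsup_le_of_eventually_le_tendsto_0[OF _ _ lam])
    show "\<forall>\<^sub>F n in sequentially. lams n \<le> ereal (ln 4 / ln (real n + 4) + 1 / X n + 2 * \<epsilon> n)"
      using ev by (rule eventually_mono) (simp add: props_def)
    have "(\<lambda>n. ln 4 / ln (real n + 4) + 1 / X n) \<longlonglongrightarrow> 0"
      unfolding X_def \<rho>_def using r by real_asymp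
    then show "(\<lambda>n. ln 4 / ln (real n + 4) + 1 / X n + 2 * \<epsilon> n) \<longlonglongrightarrow> 0"
      using tendsto_add[OF _ tendsto_mult_right_zero[OF \<epsilon>, of 2]] by simp
  qed
  ultimately show ?thesis unfolding id_achievable_def using code by blast
qed

lemma id_achievable_nonpos:
  assumes ne: "\<forall>n\<ge>1. cost_set c \<Gamma> n \<noteq> {}" and r: "r \<le> 0" and mu: "mu \<ge> 0"
  shows "id_achievable W Y c \<Gamma> mu lam r"
proof -
  define x0 where "x0 n = (SOME x. x \<in> cost_set c \<Gamma> n)" for n
  have "\<forall>n\<ge>1. x0 n \<in> cost_set c \<Gamma> n" using ne by (simp add: x0_def some_in_eq)
  then have "\<forall>n\<ge>1. idcode W Y c \<Gamma> n 1 (\<lambda>_. return_pmf (x0 n)) (\<lambda>_. space (Y n)) (ereal 0) (-\<infinity>)"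
    using idcode_trivial by blast
  then show ?thesis unfolding id_achievable_def using r mu
    by (intro exI[of _ "\<lambda>_. 1"] exI[of _ "\<lambda>n _. return_pmf (x0 n)"] exI[of _ "\<lambda>n _. space (Y n)"]
        exI[of _ "\<lambda>_. ereal 0"] exI[of _ "\<lambda>_. -\<infinity>"]) (simp add: Limsup_const Liminf_const)
qed

lemma Cs_le_IDcap:
  fixes W :: "nat \<Rightarrow> ('a::finite) list \<Rightarrow> 'b measure"
  assumes gc: "general_channel W Y" and ne: "\<forall>n\<ge>1. cost_set c \<Gamma> n \<noteq> {}"
    and mu: "mu \<ge> 0" and lam: "lam \<ge> 0"
  shows "Cs W Y c \<Gamma> \<le> IDcap W Y c \<Gamma> mu lam"
  unfolding Cs_def
proof (rule Sup_least, clarify)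
  fix R assume tc: "tc_achievable W Y c \<Gamma> R"
  have "id_achievable W Y c \<Gamma> mu lam r" if "r < R" for r
    using id_achievable_of_tc_achievable[OF gc tc _ that mu lam] id_achievable_nonpos[OF ne _ mu]
    by (cases "r \<le> 0") auto
  then have "ereal r \<le> IDcap W Y c \<Gamma> mu lam" if "r < R" for r
    using that unfolding IDcap_def by (auto intro: Sup_upper)
  then show "ereal R \<le> IDcap W Y c \<Gamma> mu lam"
    by (metis ereal_dense2 less_ereal.simps(1) not_le)
qed

lemma Cs_IDcap_eq_MInf_if_cost_set_empty:
  assumes "n \<ge> 1" "cost_set c \<Gamma> n = {}"
  shows "Cs W Y c \<Gamma> = -\<infinity>" and "IDcap W Y c \<Gamma> mu lam = -\<infinity>"
proof -
  have "\<not> tc_achievable W Y c \<Gamma> R" for R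
    using assms unfolding tc_achievable_def tcode_def by force
  then show "Cs W Y c \<Gamma> = -\<infinity>" unfolding Cs_def by (simp add: bot_ereal_def)
  have "\<not> id_achievable W Y c \<Gamma> mu lam R" for R
    using assms set_pmf_not_empty unfolding id_achievable_def idcode_def by fastforce
  then show "IDcap W Y c \<Gamma> mu lam = -\<infinity>" unfolding IDcap_def by (simp add: bot_ereal_def)
qed

theorem corollary5p1:
  fixes W :: "nat \<Rightarrow> ('a::finite) list \<Rightarrow> 'b measure"
    and Y :: "nat \<Rightarrow> 'b measure"
    and c :: "nat \<Rightarrow> 'a list \<Rightarrow> real"
    and \<Gamma> mu lam :: real
  assumes "general_channel W Y"
    and "strong_converse W Y c \<Gamma>"
    and "mu \<ge> 0" and "lam \<ge> 0" and "mu + lam < 1"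
  shows "IDcap W Y c \<Gamma> mu lam = Cs W Y c \<Gamma>"
proof (cases "\<forall>n\<ge>1. cost_set c \<Gamma> n \<noteq> {}")
  case True
  then show ?thesis
    using IDcap_le_Cs[OF assms(1,2) True assms(5)] Cs_le_IDcap[OF assms(1) True assms(3,4)] by simp
next
  case False
  then obtain n where "n \<ge> 1" "cost_set c \<Gamma> n = {}" by blast
  then show ?thesis using Cs_IDcap_eq_MInf_if_cost_set_empty by metis
qed

end
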